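(* Let $n\geqslant2$, $0<\varepsilon<1$, $i_0,j_0\in\{0,\dots,n\}$, $B\geqslant1$, $Q=\sqrt B$. Let $\boldsymbol{x},\boldsymbol{y}\in\mathbf{Z}^{n+1}$ with $x_{i_0},y_{j_0}\geqslant1$, $|x_i|\leqslant x_{i_0}$ and $|y_j|\leqslant y_{j_0}$ for all $i,j$, and put $P=B/(x_{i_0}y_{j_0})$. For an integer $q\geqslant1$ and $\boldsymbol{c}\in\mathbf{Z}^{n+1}\setminus\{\boldsymbol 0\}$ let \[I(\boldsymbol{c})=\int_{\mathbf{R}^{n+1}}\underline{w}_\varepsilon(\boldsymbol{u})\,h\Big(\frac qQ,\frac{\sum_kx_ky_ku_k}{x_{i_0}y_{j_0}}\Big)e_q(-P\,\boldsymbol{c}.\boldsymbol{u})\,d\boldsymbol{u}.\] Then for every integer $N\geqslant0$, \[I(\boldsymbol{c})\ll\frac Qq\Big(\frac{Q}{P|\boldsymbol{c}|}\Big)^N=\frac Qq\Big(\frac{x_{i_0}y_{j_0}}{\sqrt B\,|\boldsymbol{c}|}\Big)^N,\] with an implied constant depending only on $n,N,\varepsilon$.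
   Context: $|\boldsymbol{c}|=\max_k|c_k|$. $e(x)=\exp(2i\pi x)$, $e_q(x)=e(x/q)$. $\omega_0(x)=\exp(-(1-x^2)^{-1})$ for $|x|<1$, $0$ otherwise; $c_0=\int\omega_0$; $\omega(x)=4c_0^{-1}\omega_0(4x-3)$; $h(x,y)=\sum_{j\geqslant1}\frac1{xj}(\omega(xj)-\omega(\frac{|y|}{xj}))$ for $x>0$. $\underline{\omega}_\varepsilon(x)=c_0^{-1}\int_{-\infty}^{x/\varepsilon-1}\omega_0(y)dy$, and $\underline{w}_\varepsilon(\boldsymbol{u})=\prod_{k=0}^n\underline{\omega}_\varepsilon(1-|u_k|)\underline{\omega}_\varepsilon(|u_k|-\frac1P)$. *)

theory Defs
  imports "HOL-Analysis.Analysis"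
begin

definition e_char :: "real \<Rightarrow> complex" where
  "e_char x = exp (2 * pi * \<i> * complex_of_real x)"

definition e_q :: "real \<Rightarrow> real \<Rightarrow> complex" where
  "e_q q x = e_char (x / q)"

definition omega0 :: "real \<Rightarrow> real" where
  "omega0 x = (if \<bar>x\<bar> < 1 then exp (- 1 / (1 - x\<^sup>2)) else 0)"

definition c0 :: real where
  "c0 = integral\<^sup>L lborel omega0"

definition omega :: "real \<Rightarrow> real" where
  "omega x = 4 / c0 * omega0 (4 * x - 3)"

definition h_fun :: "real \<Rightarrow> real \<Rightarrow> real" where
  "h_fun x y = (\<Sum>j. 1 / (x * real (Suc j)) *
      (omega (x * real (Suc j)) - omega (\<bar>y\<bar> / (x * real (Suc j)))))"

definition omega_low :: "real \<Rightarrow> real \<Rightarrow> real" where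
  "omega_low \<epsilon> x = 1 / c0 * (LINT y:{..x / \<epsilon> - 1}|lborel. omega0 y)"

definition w_low :: "nat \<Rightarrow> real \<Rightarrow> real \<Rightarrow> (nat \<Rightarrow> real) \<Rightarrow> real" where
  "w_low n \<epsilon> P u = (\<Prod>k\<in>{0..n}. omega_low \<epsilon> (1 - \<bar>u k\<bar>) * omega_low \<epsilon> (\<bar>u k\<bar> - 1 / P))"

definition supnorm :: "nat \<Rightarrow> (nat \<Rightarrow> int) \<Rightarrow> real" where
  "supnorm n c = Max ((\<lambda>k. real_of_int \<bar>c k\<bar>) ` {0..n})"

definition I_int :: "nat \<Rightarrow> real \<Rightarrow> real \<Rightarrow> (nat \<Rightarrow> int) \<Rightarrow> (nat \<Rightarrow> int) \<Rightarrow> nat \<Rightarrow> nat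
     \<Rightarrow> nat \<Rightarrow> (nat \<Rightarrow> int) \<Rightarrow> complex" where
  "I_int n \<epsilon> B x y i0 j0 q c =
    (let Q = sqrt B; P = B / (real_of_int (x i0) * real_of_int (y j0)) in
     integral\<^sup>L (PiM {0..n} (\<lambda>_. lborel))
       (\<lambda>u. complex_of_real (w_low n \<epsilon> P u *
              h_fun (real q / Q) ((\<Sum>k\<in>{0..n}. real_of_int (x k * y k) * u k)
                                   / (real_of_int (x i0) * real_of_int (y j0))))
            * e_q (real q) (- P * (\<Sum>k\<in>{0..n}. real_of_int (c k) * u k))))"

end

theory Submission
  imports Defs "HOL-Computational_Algebra.Polynomial"
begin

text \<open>Pick \<open>k\<close> with \<open>|c\<^sub>k| = |c|\<close> and put \<open>d = q/(2 P c\<^sub>k)\<close>. Translating \<open>u\<^sub>k\<close> by \<open>d\<close> changes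
  the sign of \<open>e\<^sub>q(-P c\<cdot>u)\<close>, so a discrete integration by parts, repeated \<open>N\<close> times, gives
  \<open>I(c) = 2\<^sup>-\<^sup>N \<integral> (\<Delta>\<^sup>N F)(u) e\<^sub>q(-P c\<cdot>u) du\<close>, where \<open>F\<close> is the rest of the integrand and \<open>\<Delta>\<close> is
  the difference of step \<open>d\<close> in the \<open>k\<close>-th variable. By the mean value theorem
  \<open>|\<Delta>\<^sup>N F| \<le> |d|\<^sup>N sup |\<partial>\<^sub>k\<^sup>N F|\<close>, and \<open>\<Delta>\<^sup>N F\<close> is supported on a set of measure at most
  \<open>(N+1) 2\<^sup>n\<^sup>+\<^sup>1\<close>. The derivatives of \<open>w\<^sub>\<epsilon>\<close> are bounded in terms of \<open>\<epsilon>\<close> alone. On the support of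
  \<open>w\<^sub>\<epsilon>\<close> the series defining \<open>h(x\<^sub>0, \<cdot>)\<close>, \<open>x\<^sub>0 = q/Q\<close>, is a finite sum, which vanishes for
  \<open>x\<^sub>0 \<ge> 2(n+1)\<close>; its \<open>m\<close>-th derivative is \<open>O(x\<^sub>0\<^sup>-\<^sup>m\<^sup>-\<^sup>1)\<close> because at any \<open>y\<close> only
  \<open>O(1 + |y|/x\<^sub>0)\<close> of its terms are nonzero. Hence \<open>I(c) = O((|d|/x\<^sub>0)\<^sup>N/x\<^sub>0)\<close>, and
  \<open>|d|/x\<^sub>0 = Q/(2P|c|)\<close>.\<close>

section \<open>Sequences of successive derivatives\<close>

definition deriv_seq :: "(nat \<Rightarrow> real \<Rightarrow> real) \<Rightarrow> bool" where
  "deriv_seq D \<longleftrightarrow> (\<forall>m x. (D m has_real_derivative D (Suc m) x) (at x))"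

lemma deriv_seqD: "deriv_seq D \<Longrightarrow> (D m has_real_derivative D (Suc m) x) (at x)"
  by (simp add: deriv_seq_def)

lemma deriv_seq_continuous_on: "deriv_seq D \<Longrightarrow> continuous_on S (D m)"
  by (meson DERIV_isCont continuous_at_imp_continuous_on deriv_seqD)

lemma deriv_seq_borel_measurable: "deriv_seq D \<Longrightarrow> D m \<in> borel_measurable borel"
  by (intro borel_measurable_continuous_onI deriv_seq_continuous_on)

lemma deriv_seq_affine:
  assumes "deriv_seq D"
  shows "deriv_seq (\<lambda>m x. a^m * D m (a*x + b))"
  unfolding deriv_seq_def
proof (intro allI)
  fix m x
  have "((\<lambda>x. D m (a*x + b)) has_real_derivative D (Suc m) (a*x + b) * a) (at x)"
    by (rule DERIV_chain2[OF deriv_seqD[OF assms]]) (auto intro!: derivative_eq_intros)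
  from DERIV_cmult[OF this, of "a^m"]
  show "((\<lambda>x. a^m * D m (a*x + b)) has_real_derivative a^Suc m * D (Suc m) (a*x + b)) (at x)"
    by (simp add: algebra_simps)
qed

lemma deriv_seq_cmult: "deriv_seq D \<Longrightarrow> deriv_seq (\<lambda>m x. c * D m x)"
  unfolding deriv_seq_def by (auto intro: DERIV_cmult)

lemma deriv_seq_add: "deriv_seq D \<Longrightarrow> deriv_seq E \<Longrightarrow> deriv_seq (\<lambda>m x. D m x + E m x)"
  unfolding deriv_seq_def by (auto intro: DERIV_add)

lemma deriv_seq_sum:
  "(\<And>j. j \<in> J \<Longrightarrow> deriv_seq (D j)) \<Longrightarrow> deriv_seq (\<lambda>m x. \<Sum>j\<in>J. D j m x)"
  unfolding deriv_seq_def by (auto intro!: DERIV_sum)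

lemma deriv_seq_const: "deriv_seq (\<lambda>m x. if m = 0 then c else 0)"
  unfolding deriv_seq_def by auto

definition leibniz_prod ::
    "(nat \<Rightarrow> real \<Rightarrow> real) \<Rightarrow> (nat \<Rightarrow> real \<Rightarrow> real) \<Rightarrow> nat \<Rightarrow> real \<Rightarrow> real" where
  "leibniz_prod D E m x = (\<Sum>i=0..m. real (m choose i) * D i x * E (m - i) x)"

lemma leibniz_prod_0 [simp]: "leibniz_prod D E 0 x = D 0 x * E 0 x"
  by (simp add: leibniz_prod_def)

lemma deriv_seq_leibniz_prod:
  assumes D: "deriv_seq D" and E: "deriv_seq E"
  shows "deriv_seq (leibniz_prod D E)"
  unfolding deriv_seq_def
proof (intro allI)
  fix m z
  have choose_Suc: "Suc m choose i = (m choose i) + (if i = 0 then 0 else m choose (i - 1))" for i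
    by (cases i) simp_all
  have "((\<lambda>x. leibniz_prod D E m x) has_real_derivative
      (\<Sum>i=0..m. real (m choose i) * (D (Suc i) z * E (m - i) z + E (Suc (m - i)) z * D i z))) (at z)"
    unfolding leibniz_prod_def
  proof (intro DERIV_sum)
    fix i
    have "((\<lambda>x. D i x * E (m - i) x) has_real_derivative
        D (Suc i) z * E (m - i) z + E (Suc (m - i)) z * D i z) (at z)"
      using DERIV_mult[OF deriv_seqD[OF D, of i] deriv_seqD[OF E, of "m - i"]] by (simp add: algebra_simps)
    from DERIV_cmult[OF this, of "real (m choose i)"]
    show "((\<lambda>x. real (m choose i) * D i x * E (m - i) x) has_real_derivative
        real (m choose i) * (D (Suc i) z * E (m - i) z + E (Suc (m - i)) z * D i z)) (at z)"
      by (simp add: algebra_simps)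
  qed
  moreover have "(\<Sum>i=0..m. real (m choose i) * (D (Suc i) z * E (m - i) z + E (Suc (m - i)) z * D i z))
      = leibniz_prod D E (Suc m) z"
    unfolding leibniz_prod_def
    apply (simp add: choose_Suc algebra_simps sum.distrib)
    apply (subst (4) sum_Suc_reindex)
    apply (auto simp: algebra_simps Suc_diff_le intro: sum.cong)
    done
  ultimately show "(leibniz_prod D E m has_real_derivative leibniz_prod D E (Suc m) z) (at z)"
    by simp
qed

lemma abs_leibniz_prod_le:
  assumes "\<And>i x. \<bar>D i x\<bar> \<le> KD i" and "\<And>i x. \<bar>E i x\<bar> \<le> KE i"
  shows "\<bar>leibniz_prod D E m x\<bar> \<le> (\<Sum>i=0..m. real (m choose i) * KD i * KE (m - i))"
proof -
  have "\<bar>leibniz_prod D E m x\<bar> \<le> (\<Sum>i=0..m. \<bar>real (m choose i) * D i x * E (m - i) x\<bar>)"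
    unfolding leibniz_prod_def by (rule sum_abs)
  also have "\<dots> \<le> (\<Sum>i=0..m. real (m choose i) * KD i * KE (m - i))"
  proof (intro sum_mono)
    fix i
    have "0 \<le> KD i" using assms(1)[of i x] by linarith
    then show "\<bar>real (m choose i) * D i x * E (m - i) x\<bar> \<le> real (m choose i) * KD i * KE (m - i)"
      unfolding abs_mult using assms by (intro mult_mono) auto
  qed
  finally show ?thesis .
qed

section \<open>Finite differences\<close>

definition fdiff :: "real \<Rightarrow> (real \<Rightarrow> 'a::ab_group_add) \<Rightarrow> real \<Rightarrow> 'a" where
  "fdiff d g t = g t - g (t + d)"

lemma fdiff_funpow_Suc:
  "(fdiff d ^^ Suc m) g t = (fdiff d ^^ m) g t - (fdiff d ^^ m) g (t + d)"
  by (simp only: funpow.simps o_apply fdiff_def)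

lemma abs_fdiff_funpow_le:
  assumes "deriv_seq D" "\<And>x. \<bar>D m x\<bar> \<le> M"
  shows "\<bar>(fdiff d ^^ m) (D 0) t\<bar> \<le> \<bar>d\<bar>^m * M"
  using assms
proof (induction m arbitrary: D M)
  case 0
  then show ?case by simp
next
  case (Suc m)
  define D' where "D' = (\<lambda>j x. D j x - D j (x + d))"
  have "deriv_seq D'"
    unfolding D'_def
    using deriv_seq_add[OF Suc.prems(1) deriv_seq_cmult[OF deriv_seq_affine[OF Suc.prems(1), of 1 d], of "-1"]]
    by (simp add: add.commute)
  moreover have "\<bar>D' m x\<bar> \<le> \<bar>d\<bar> * M" for x
  proof -
    have "norm (D m x - D m (x + d)) \<le> M * norm (x - (x + d))"
      by (rule field_differentiable_bound[of UNIV])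
        (auto intro: has_field_derivative_at_within deriv_seqD[OF Suc.prems(1)] Suc.prems(2))
    then show ?thesis by (simp add: D'_def mult.commute)
  qed
  ultimately have "\<bar>(fdiff d ^^ m) (D' 0) t\<bar> \<le> \<bar>d\<bar>^m * (\<bar>d\<bar> * M)"
    by (rule Suc.IH)
  moreover have "D' 0 = fdiff d (D 0)"
    by (auto simp: D'_def fdiff_def)
  ultimately show ?case
    by (simp add: funpow_Suc_right algebra_simps del: funpow.simps)
qed

lemma abs_fdiff_funpow_le_sup:
  fixes g :: "real \<Rightarrow> real"
  assumes "\<And>t. \<bar>g t\<bar> \<le> M"
  shows "\<bar>(fdiff d ^^ m) g t\<bar> \<le> 2^m * M"
proof (induction m arbitrary: t)
  case 0
  then show ?case using assms by simp
next
  case (Suc m)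
  have "\<bar>(fdiff d ^^ Suc m) g t\<bar> \<le> \<bar>(fdiff d ^^ m) g t\<bar> + \<bar>(fdiff d ^^ m) g (t + d)\<bar>"
    unfolding fdiff_funpow_Suc by (rule abs_triangle_ineq4)
  also have "\<dots> \<le> 2^m * M + 2^m * M"
    by (intro add_mono Suc.IH)
  finally show ?case by (simp add: algebra_simps)
qed

lemma fdiff_funpow_nonzero:
  "(fdiff d ^^ m) g t \<noteq> 0 \<Longrightarrow> \<exists>i\<le>m. g (t + real i * d) \<noteq> 0"
proof (induction m arbitrary: t)
  case 0
  then show ?case by auto
next
  case (Suc m)
  then have "(fdiff d ^^ m) g t \<noteq> 0 \<or> (fdiff d ^^ m) g (t + d) \<noteq> 0"
    unfolding fdiff_funpow_Suc by auto
  then show ?case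
  proof
    assume "(fdiff d ^^ m) g t \<noteq> 0"
    then obtain i where "i \<le> m" "g (t + real i * d) \<noteq> 0"
      using Suc.IH by blast
    then show ?case by (intro exI[of _ i]) auto
  next
    assume "(fdiff d ^^ m) g (t + d) \<noteq> 0"
    then obtain i where "i \<le> m" "g (t + d + real i * d) \<noteq> 0"
      using Suc.IH by blast
    then show ?case by (intro exI[of _ "Suc i"]) (auto simp: algebra_simps)
  qed
qed

section \<open>The bump function \<open>\<omega>\<^sub>0\<close> and its derivatives\<close>

lemma power_div_fact_le_exp:
  fixes t :: real
  assumes "t \<ge> 0"
  shows "t^k / fact k \<le> exp t"
proof -
  have "summable (\<lambda>n. t^n / fact n)"
    using summable_exp_generic[of t] by (simp add: divide_inverse mult.commute)
  then have "(\<Sum>n\<in>{k}. t^n / fact n) \<le> (\<Sum>n. t^n / fact n)"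
    by (rule sum_le_suminf) (use assms in auto)
  also have "\<dots> = exp t"
    by (simp add: exp_def divide_inverse mult.commute scaleR_conv_of_real)
  finally show ?thesis by simp
qed

lemma exp_neg_inverse_le:
  fixes s :: real
  assumes "s > 0"
  shows "exp (- 1 / s) \<le> fact k * s^k"
proof -
  have "(1/s)^k / fact k \<le> exp (1/s)"
    by (rule power_div_fact_le_exp) (use assms in simp)
  then have "1 / exp (1/s) \<le> fact k * s^k"
    using assms by (simp add: power_one_over field_simps)
  then show ?thesis by (simp add: exp_minus inverse_eq_divide)
qed

lemma has_real_derivative_zero_if_quadratic_bound:
  fixes f :: "real \<Rightarrow> real"
  assumes "f x = 0" and "\<And>y. \<bar>f y\<bar> \<le> K * (y - x)^2"
  shows "(f has_real_derivative 0) (at x)"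
  unfolding has_field_derivative_iff
proof (rule Lim_null_comparison)
  show "\<forall>\<^sub>F y in at x. norm ((f y - f x) / (y - x)) \<le> \<bar>K\<bar> * \<bar>y - x\<bar>"
  proof (intro always_eventually allI)
    fix y
    show "norm ((f y - f x) / (y - x)) \<le> \<bar>K\<bar> * \<bar>y - x\<bar>"
    proof (cases "y = x")
      case False
      have "\<bar>f y\<bar> \<le> \<bar>K\<bar> * \<bar>y - x\<bar> * \<bar>y - x\<bar>"
        using assms(2)[of y] abs_ge_self[of K] mult_right_mono[of K "\<bar>K\<bar>" "(y-x)^2"]
        by (simp add: power2_eq_square abs_mult_self_eq mult.assoc)
      then show ?thesis using False assms(1) by (simp add: divide_le_eq)
    qed simp
  qed
  show "((\<lambda>y. \<bar>K\<bar> * \<bar>y - x\<bar>) \<longlongrightarrow> 0) (at x)"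
    by (rule tendsto_eq_intros | simp)+
qed

text \<open>On \<open>|x| < 1\<close> the \<open>m\<close>-th derivative of \<open>\<omega>\<^sub>0\<close> is \<open>p\<^sub>m(x) (1 - x\<^sup>2)\<^sup>-\<^sup>2\<^sup>m \<omega>\<^sub>0(x)\<close>
  for these polynomials.\<close>
fun omega0_deriv_poly :: "nat \<Rightarrow> real poly" where
  "omega0_deriv_poly 0 = 1"
| "omega0_deriv_poly (Suc m) =
     pderiv (omega0_deriv_poly m) * [:1, 0, -1:]^2
     + smult (4 * real m) ([:0, 1:] * omega0_deriv_poly m * [:1, 0, -1:])
     - smult 2 ([:0, 1:] * omega0_deriv_poly m)"

definition omega0_deriv :: "nat \<Rightarrow> real \<Rightarrow> real" where
  "omega0_deriv m x = (if \<bar>x\<bar> < 1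
     then poly (omega0_deriv_poly m) x / (1 - x^2)^(2*m) * exp (- 1 / (1 - x^2)) else 0)"

lemma omega0_deriv_0: "omega0_deriv 0 = omega0"
  by (auto simp: omega0_deriv_def omega0_def fun_eq_iff)

lemma omega0_deriv_eq_0: "\<bar>x\<bar> \<ge> 1 \<Longrightarrow> omega0_deriv m x = 0"
  by (simp add: omega0_deriv_def)

text \<open>The factor \<open>exp(-1/s)\<close> beats every power of \<open>s = 1 - x\<^sup>2\<close>; two spare powers give
  differentiability at \<open>\<plusminus>1\<close>.\<close>
lemma omega0_deriv_bounded_by_square:
  "\<exists>C\<ge>0. \<forall>x. \<bar>x\<bar> < 1 \<longrightarrow> \<bar>omega0_deriv m x\<bar> \<le> C * (1 - x^2)^2"
proof -
  have "compact (poly (omega0_deriv_poly m) ` {-1..1})"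
    by (intro compact_continuous_image continuous_intros) auto
  then obtain Cp where Cp: "\<And>x. x \<in> {-1..1} \<Longrightarrow> \<bar>poly (omega0_deriv_poly m) x\<bar> \<le> Cp"
    using compact_imp_bounded[THEN bounded_real[THEN iffD1]] by (meson image_eqI)
  have Cp0: "Cp \<ge> 0" using Cp[of 0] by simp
  show ?thesis
  proof (intro exI[of _ "Cp * fact (2*m + 2)"] conjI allI impI)
    show "Cp * fact (2*m + 2) \<ge> 0" using Cp0 by simp
    fix x :: real
    assume x: "\<bar>x\<bar> < 1"
    define s where "s = 1 - x^2"
    have s0: "s > 0" using x by (simp add: s_def abs_square_less_1)
    have "\<bar>omega0_deriv m x\<bar> = \<bar>poly (omega0_deriv_poly m) x\<bar> / s^(2*m) * exp (- 1 / s)"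
      using x s0 by (simp add: omega0_deriv_def s_def abs_mult abs_divide)
    also have "\<dots> \<le> Cp / s^(2*m) * (fact (2*m + 2) * s^(2*m + 2))"
      using Cp[of x] x s0 Cp0
      by (intro mult_mono divide_right_mono exp_neg_inverse_le) (auto simp: abs_less_iff)
    also have "\<dots> = Cp * fact (2*m + 2) * s^2"
      using s0 by (simp add: power_add field_simps power2_eq_square)
    finally show "\<bar>omega0_deriv m x\<bar> \<le> Cp * fact (2*m + 2) * (1 - x^2)^2"
      by (simp add: s_def)
  qed
qed

lemma omega0_deriv_has_derivative_inside:
  assumes x: "\<bar>x\<bar> < 1"
  shows "(omega0_deriv m has_real_derivative omega0_deriv (Suc m) x) (at x)"
proof -
  define s where "s = 1 - x^2"
  have s0: "s > 0" using x by (simp add: s_def abs_square_less_1)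
  define r where "r = (\<lambda>x::real. inverse (1 - x^2))"
  define p where "p = omega0_deriv_poly m"
  have "((\<lambda>x::real. 1 - x^2) has_real_derivative -(2*x)) (at x)"
    by (auto intro!: derivative_eq_intros)
  from DERIV_inverse_fun[OF this] s0
  have dr: "(r has_real_derivative 2*x * r x ^ 2) (at x)"
    unfolding r_def by (simp add: s_def power2_eq_square inverse_mult_distrib)
  have d2: "((\<lambda>x. r x ^ (2*m)) has_real_derivative real (2*m) * (2*x * r x ^ 2 * r x ^ (2*m - 1))) (at x)"
    using DERIV_power[OF dr, of "2*m"] by simp
  have d3: "((\<lambda>x. exp (- r x)) has_real_derivative exp (- r x) * (- (2*x * r x ^ 2))) (at x)"
    using DERIV_fun_exp[OF DERIV_minus[OF dr]] by simp
  have d: "((\<lambda>x. poly p x * r x ^ (2*m) * exp (- r x)) has_real_derivative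
      (poly (pderiv p) x * r x ^ (2*m) + real (2*m) * (2*x * r x ^ 2 * r x ^ (2*m - 1)) * poly p x)
        * exp (- r x)
      + exp (- r x) * (- (2*x * r x ^ 2)) * (poly p x * r x ^ (2*m))) (at x)"
    by (rule DERIV_mult[OF DERIV_mult[OF poly_DERIV d2] d3])
  have rx: "r x = 1 / s" by (simp add: r_def s_def inverse_eq_divide)
  have "(poly (pderiv p) x * r x ^ (2*m) + real (2*m) * (2*x * r x ^ 2 * r x ^ (2*m - 1)) * poly p x)
        * exp (- r x)
      + exp (- r x) * (- (2*x * r x ^ 2)) * (poly p x * r x ^ (2*m)) = omega0_deriv (Suc m) x"
  proof -
    have A: "real (2*m) * (2*x * r x ^ 2 * r x ^ (2*m - 1)) = 4 * real m * x * r x^(2*m) * r x"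
      by (cases m) (simp_all add: power2_eq_square algebra_simps)
    have "poly (omega0_deriv_poly (Suc m)) x
        = poly (pderiv p) x * s^2 + 4 * real m * x * poly p x * s - 2 * x * poly p x"
      by (simp add: p_def s_def power2_eq_square algebra_simps)
    then have C: "omega0_deriv (Suc m) x
        = (poly (pderiv p) x * s^2 + 4 * real m * x * poly p x * s - 2 * x * poly p x)
          / (s^(2*m) * s^2) * exp (- r x)"
      using x by (simp add: omega0_deriv_def rx s_def power_add power2_eq_square mult_ac)
    have rt: "r x ^ (2*m) = 1 / s^(2*m)" by (simp add: rx power_one_over)
    show ?thesis
      unfolding C A using s0 by (simp add: rt rx field_simps power2_eq_square)
  qed
  then have d': "((\<lambda>x. poly p x * r x ^ (2*m) * exp (- r x)) has_real_derivative omega0_deriv (Suc m) x) (at x)"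
    using d by simp
  show ?thesis
  proof (rule has_field_derivative_transform_within_open[OF d', of "{y. \<bar>y\<bar> < 1}"])
    show "open {y::real. \<bar>y\<bar> < 1}" by (intro open_Collect_less continuous_intros)
    show "x \<in> {y. \<bar>y\<bar> < 1}" using x by simp
  qed (simp add: omega0_deriv_def r_def p_def inverse_eq_divide power_one_over)
qed

lemma one_minus_square_le:
  fixes x y :: real
  assumes y: "\<bar>y\<bar> < 1" and x: "\<bar>x\<bar> \<ge> 1"
  shows "(1 - y^2)^2 \<le> 4 * (y - x)^2"
proof -
  have "(1 - y) * (1 + y) \<le> 2 * \<bar>y - x\<bar>"
  proof (cases "x \<ge> 1")
    case True
    have "(1 - y) * (1 + y) \<le> (x - y) * 2"
      using y True by (intro mult_mono) (auto simp: abs_less_iff)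
    then show ?thesis using True y by (simp add: abs_if)
  next
    case False
    then have "x \<le> -1" using x by auto
    then have "(1 + y) * (1 - y) \<le> (y - x) * 2"
      using y by (intro mult_mono) (auto simp: abs_less_iff)
    then show ?thesis using \<open>x \<le> -1\<close> y by (simp add: abs_if mult.commute)
  qed
  moreover have "0 \<le> (1 - y) * (1 + y)" using y by (simp add: abs_less_iff)
  ultimately have "((1 - y) * (1 + y))^2 \<le> (2 * \<bar>y - x\<bar>)^2"
    by (intro power_mono) auto
  then show ?thesis by (simp add: power_mult_distrib power2_eq_square algebra_simps)
qed

lemma deriv_seq_omega0_deriv: "deriv_seq omega0_deriv"
  unfolding deriv_seq_def
proof (intro allI)
  fix m and x :: real
  show "(omega0_deriv m has_real_derivative omega0_deriv (Suc m) x) (at x)"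
  proof (cases "\<bar>x\<bar> < 1")
    case True
    then show ?thesis by (rule omega0_deriv_has_derivative_inside)
  next
    case False
    obtain C where C: "C \<ge> 0" "\<And>y. \<bar>y\<bar> < 1 \<Longrightarrow> \<bar>omega0_deriv m y\<bar> \<le> C * (1 - y^2)^2"
      using omega0_deriv_bounded_by_square[of m] by auto
    have "(omega0_deriv m has_real_derivative 0) (at x)"
    proof (rule has_real_derivative_zero_if_quadratic_bound[of _ _ "4 * C"])
      show "omega0_deriv m x = 0" using False by (simp add: omega0_deriv_eq_0)
      fix y :: real
      show "\<bar>omega0_deriv m y\<bar> \<le> 4 * C * (y - x)^2"
      proof (cases "\<bar>y\<bar> < 1")
        case True
        then have "\<bar>omega0_deriv m y\<bar> \<le> C * (4 * (y - x)^2)"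
          using C False by (intro order_trans[OF C(2)] mult_left_mono one_minus_square_le) auto
        then show ?thesis by simp
      qed (use C in \<open>auto simp: omega0_deriv_eq_0\<close>)
    qed
    then show ?thesis using False by (simp add: omega0_deriv_eq_0)
  qed
qed

lemma omega0_deriv_bounded: "\<exists>C. \<forall>x. \<bar>omega0_deriv m x\<bar> \<le> C"
proof -
  obtain C where C: "C \<ge> 0" "\<And>y. \<bar>y\<bar> < 1 \<Longrightarrow> \<bar>omega0_deriv m y\<bar> \<le> C * (1 - y^2)^2"
    using omega0_deriv_bounded_by_square[of m] by auto
  have "\<bar>omega0_deriv m x\<bar> \<le> C" for x
  proof (cases "\<bar>x\<bar> < 1")
    case True
    have "(1 - x^2)^2 \<le> 1"
      using True by (intro power_le_one) (auto simp: abs_square_less_1 less_imp_le)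
    then show ?thesis using C(2)[OF True] C(1) mult_left_le[of "(1 - x^2)^2" C] by linarith
  qed (use C in \<open>auto simp: omega0_deriv_eq_0\<close>)
  then show ?thesis by blast
qed

lemma omega0_eq_0: "\<bar>x\<bar> \<ge> 1 \<Longrightarrow> omega0 x = 0"
  by (simp add: omega0_def)

section \<open>The cut-off functions \<open>\<omega>\<^sub>\<epsilon>\<close> and the factors of \<open>w\<^sub>\<epsilon>\<close>\<close>

lemma bounded_if_deriv_eq_0_outside:
  fixes f g :: "real \<Rightarrow> real"
  assumes d: "\<And>x. (f has_real_derivative g x) (at x)" and v: "\<And>x. \<bar>x\<bar> \<ge> 1 \<Longrightarrow> g x = 0"
  shows "\<exists>C. \<forall>x. \<bar>f x\<bar> \<le> C"
proof -
  have cont: "continuous_on S f" for S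
    using d by (meson DERIV_isCont continuous_at_imp_continuous_on)
  obtain c1 where c1: "\<forall>x\<in>{1..}. f x = c1"
    using has_field_derivative_zero_constant[of "{1..}" f]
    by (metis d v atLeast_iff convex_real_interval(1) has_field_derivative_at_within abs_of_nonneg
        order_trans zero_le_one)
  obtain c2 where c2: "\<forall>x\<in>{..-1}. f x = c2"
    using has_field_derivative_zero_constant[of "{..-1}" f] d v
    by (smt (verit) atMost_iff convex_real_interval(2) has_field_derivative_at_within)
  have "compact (f ` {-1..1})"
    by (intro compact_continuous_image cont) auto
  then obtain M where M: "\<And>x. x \<in> {-1..1} \<Longrightarrow> \<bar>f x\<bar> \<le> M"
    using compact_imp_bounded[THEN bounded_real[THEN iffD1]] by (meson image_eqI)
  have "\<bar>f x\<bar> \<le> M" for x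
  proof -
    consider "x \<ge> 1" | "x \<le> -1" | "x \<in> {-1..1}" by fastforce
    then show ?thesis
    proof cases
      case 1
      then show ?thesis using c1 M[of 1] by auto
    next
      case 2
      then show ?thesis using c2 M[of "-1"] by auto
    qed (rule M)
  qed
  then show ?thesis by blast
qed

definition omega0_primitive :: "real \<Rightarrow> real" where
  "omega0_primitive z = (LINT y:{..z}|lborel. omega0 y)"

lemma omega0_primitive_eq_integral: "omega0_primitive z = integral {-2..z} omega0"
proof (cases "z < -2")
  case True
  have "(\<lambda>y. indicator {..z} y *\<^sub>R omega0 y) = (\<lambda>y. 0)"
    using True by (auto simp: fun_eq_iff indicator_def omega0_eq_0)
  then show ?thesis
    using True by (simp add: omega0_primitive_def set_lebesgue_integral_def)
next
  case False
  have eq: "(\<lambda>y. indicator {..z} y *\<^sub>R omega0 y) = (\<lambda>y. indicator {-2..z} y *\<^sub>R omega0 y)"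
    using False by (auto simp: fun_eq_iff indicator_def omega0_eq_0)
  have "continuous_on {-2..z} omega0"
    using deriv_seq_continuous_on[OF deriv_seq_omega0_deriv, of _ 0] by (simp add: omega0_deriv_0)
  then have "set_integrable lborel {-2..z} omega0"
    unfolding set_integrable_def by (rule borel_integrable_compact[rotated]) auto
  then have "(LINT y:{-2..z}|lborel. omega0 y) = integral {-2..z} omega0"
    by (rule set_borel_integral_eq_integral)
  then show ?thesis
    unfolding omega0_primitive_def set_lebesgue_integral_def eq .
qed

lemma omega0_primitive_eq_0:
  assumes "x \<le> -1"
  shows "omega0_primitive x = 0"
proof -
  have "integral {-2..x} omega0 = integral {-2..x} (\<lambda>y. 0)"
    using assms by (intro integral_cong) (auto simp: omega0_eq_0)
  then show ?thesis by (simp add: omega0_primitive_eq_integral)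
qed

lemma omega0_primitive_has_derivative: "(omega0_primitive has_real_derivative omega0 z) (at z)"
proof (cases "z < -1")
  case True
  have "((\<lambda>w. 0) has_real_derivative omega0 z) (at z)"
    using True by (simp add: omega0_eq_0)
  then show ?thesis
  proof (rule has_field_derivative_transform_within_open[of _ _ _ "{..<-1}"])
    show "z \<in> {..<-1}" using True by simp
  qed (simp_all add: omega0_primitive_eq_0)
next
  case False
  have "continuous_on {-2..z+1} omega0"
    using deriv_seq_continuous_on[OF deriv_seq_omega0_deriv, of _ 0] by (simp add: omega0_deriv_0)
  then have "((\<lambda>x. integral {-2..x} omega0) has_real_derivative omega0 z) (at z within {-2..z+1})"
    using False by (intro integral_has_real_derivative) auto
  moreover have "at z within {-2..z+1} = at z"
    using False by (intro at_within_interior) auto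
  ultimately show ?thesis
    by (simp add: omega0_primitive_eq_integral[abs_def])
qed

definition omega0_primitive_deriv :: "nat \<Rightarrow> real \<Rightarrow> real" where
  "omega0_primitive_deriv m = (if m = 0 then omega0_primitive else omega0_deriv (m - 1))"

lemma deriv_seq_omega0_primitive_deriv: "deriv_seq omega0_primitive_deriv"
  unfolding deriv_seq_def
proof (intro allI)
  fix m x
  show "(omega0_primitive_deriv m has_real_derivative omega0_primitive_deriv (Suc m) x) (at x)"
    using omega0_primitive_has_derivative deriv_seqD[OF deriv_seq_omega0_deriv]
    by (cases m) (simp_all add: omega0_primitive_deriv_def omega0_deriv_0)
qed

lemma omega0_primitive_deriv_bounded: "\<exists>C. \<forall>x. \<bar>omega0_primitive_deriv m x\<bar> \<le> C"
proof (cases m)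
  case 0
  then show ?thesis
    using bounded_if_deriv_eq_0_outside[OF omega0_primitive_has_derivative omega0_eq_0]
    by (simp add: omega0_primitive_deriv_def)
next
  case (Suc k)
  then show ?thesis
    using omega0_deriv_bounded by (simp add: omega0_primitive_deriv_def)
qed

lemma omega0_primitive_deriv_eq_0: "x \<le> -1 \<Longrightarrow> omega0_primitive_deriv m x = 0"
  by (cases m) (simp_all add: omega0_primitive_deriv_def omega0_primitive_eq_0 omega0_deriv_eq_0)

text \<open>Arguments are written as \<open>a * x + b\<close> here and below so that \<open>deriv_seq_affine\<close> applies.\<close>
definition omega_low_deriv :: "real \<Rightarrow> nat \<Rightarrow> real \<Rightarrow> real" where
  "omega_low_deriv \<epsilon> m x = 1 / c0 * ((1/\<epsilon>)^m * omega0_primitive_deriv m (1/\<epsilon> * x + -1))"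

lemma deriv_seq_omega_low_deriv: "deriv_seq (omega_low_deriv \<epsilon>)"
  unfolding omega_low_deriv_def[abs_def]
  by (intro deriv_seq_cmult deriv_seq_affine deriv_seq_omega0_primitive_deriv)

lemma omega_low_deriv_0: "omega_low_deriv \<epsilon> 0 = omega_low \<epsilon>"
  by (simp add: fun_eq_iff omega_low_deriv_def omega_low_def omega0_primitive_deriv_def
      omega0_primitive_def)

lemma omega_low_deriv_eq_0: "0 < \<epsilon> \<Longrightarrow> x \<le> 0 \<Longrightarrow> omega_low_deriv \<epsilon> m x = 0"
  unfolding omega_low_deriv_def by (subst omega0_primitive_deriv_eq_0) (auto simp: field_simps)

lemma omega_low_eq_0: "0 < \<epsilon> \<Longrightarrow> x \<le> 0 \<Longrightarrow> omega_low \<epsilon> x = 0"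
  using omega_low_deriv_eq_0[of \<epsilon> x 0] by (simp add: omega_low_deriv_0)

lemma omega_low_deriv_bounded: "\<exists>K. \<forall>m x. \<bar>omega_low_deriv \<epsilon> m x\<bar> \<le> K m"
proof -
  have "\<exists>C. \<forall>x. \<bar>omega_low_deriv \<epsilon> m x\<bar> \<le> C" for m
  proof -
    obtain C where C: "\<And>x. \<bar>omega0_primitive_deriv m x\<bar> \<le> C"
      using omega0_primitive_deriv_bounded by blast
    have "\<bar>omega_low_deriv \<epsilon> m x\<bar> \<le> \<bar>1/c0\<bar> * (\<bar>1/\<epsilon>\<bar>^m * C)" for x
      unfolding omega_low_deriv_def abs_mult power_abs by (intro mult_left_mono C) auto
    then show ?thesis by blast
  qed
  then show ?thesis by metis
qed

definition w_half_deriv :: "real \<Rightarrow> real \<Rightarrow> nat \<Rightarrow> real \<Rightarrow> real" where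
  "w_half_deriv \<epsilon> P = leibniz_prod (\<lambda>m s. (-1)^m * omega_low_deriv \<epsilon> m (-1 * s + 1))
                                    (\<lambda>m s. 1^m * omega_low_deriv \<epsilon> m (1 * s + -1/P))"

text \<open>The derivatives of the factor \<open>t \<mapsto> \<omega>\<^sub>\<epsilon>(1 - |t|) \<omega>\<^sub>\<epsilon>(|t| - 1/P)\<close> of \<open>w\<^sub>\<epsilon>\<close>: it is
  smooth, since for each sign of \<open>t\<close> one of the two summands below vanishes near \<open>t\<close>.\<close>
definition w_factor_deriv :: "real \<Rightarrow> real \<Rightarrow> nat \<Rightarrow> real \<Rightarrow> real" where
  "w_factor_deriv \<epsilon> P m t = w_half_deriv \<epsilon> P m t + (-1)^m * w_half_deriv \<epsilon> P m (-1 * t + 0)"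

lemma deriv_seq_w_factor_deriv: "deriv_seq (w_factor_deriv \<epsilon> P)"
  unfolding w_factor_deriv_def[abs_def] w_half_deriv_def
  by (intro deriv_seq_add deriv_seq_affine deriv_seq_leibniz_prod deriv_seq_omega_low_deriv)

lemma w_factor_deriv_0:
  assumes "\<epsilon> > 0" and "P > 0"
  shows "w_factor_deriv \<epsilon> P 0 t = omega_low \<epsilon> (1 - \<bar>t\<bar>) * omega_low \<epsilon> (\<bar>t\<bar> - 1 / P)"
proof -
  have "0 < 1 / P" using assms(2) by simp
  then have "omega_low \<epsilon> (- \<bar>t\<bar> - 1/P) = 0"
    using assms(1) by (intro omega_low_eq_0) (auto intro: order_trans[of _ 0])
  then show ?thesis
    by (cases "t \<ge> 0")
      (simp_all add: w_factor_deriv_def w_half_deriv_def omega_low_deriv_0 algebra_simps)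
qed

lemma w_factor_deriv_0_eq_0:
  assumes "\<epsilon> > 0" and "P > 0" and "\<bar>t\<bar> \<ge> 1"
  shows "w_factor_deriv \<epsilon> P 0 t = 0"
  using omega_low_eq_0[of \<epsilon> "1 - \<bar>t\<bar>"] assms by (simp add: w_factor_deriv_0)

lemma w_low_eq_prod_w_factor:
  assumes "\<epsilon> > 0" and "P > 0"
  shows "w_low n \<epsilon> P u = (\<Prod>j\<in>{0..n}. w_factor_deriv \<epsilon> P 0 (u j))"
  unfolding w_low_def by (simp add: w_factor_deriv_0[OF assms])

lemma w_factor_deriv_bounded: "\<exists>K. \<forall>m P t. \<bar>w_factor_deriv \<epsilon> P m t\<bar> \<le> K m"
proof -
  obtain K where K: "\<And>m x. \<bar>omega_low_deriv \<epsilon> m x\<bar> \<le> K m"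
    using omega_low_deriv_bounded by blast
  define L where "L m = (\<Sum>i=0..m. real (m choose i) * K i * K (m - i))" for m
  have half: "\<bar>w_half_deriv \<epsilon> P m s\<bar> \<le> L m" for P m s
    unfolding w_half_deriv_def L_def
    by (rule abs_leibniz_prod_le) (simp_all add: abs_mult K)
  have "\<bar>w_factor_deriv \<epsilon> P m t\<bar> \<le> 2 * L m" for P m t
    using abs_triangle_ineq[of "w_half_deriv \<epsilon> P m t" "(-1)^m * w_half_deriv \<epsilon> P m (-1 * t + 0)"]
      half[of P m t] half[of P m "-1 * t + 0"]
    by (simp add: w_factor_deriv_def abs_mult)
  then show ?thesis by (intro exI[of _ "\<lambda>m. 2 * L m"]) blast
qed

section \<open>The function \<open>h\<close> and its derivatives\<close>

lemma card_nat_between_le: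
  "real (card {j::nat. a < real j \<and> real j < b}) \<le> \<bar>b - a\<bar> + 1"
proof (cases "{j::nat. a < real j \<and> real j < b} = {}")
  case True
  then have "card {j::nat. a < real j \<and> real j < b} = 0" by (metis card.empty)
  then show ?thesis by simp
next
  case False
  define S where "S = {j::nat. a < real j \<and> real j < b}"
  have fin: "finite S"
  proof (rule finite_subset)
    show "S \<subseteq> {..nat \<lceil>b\<rceil>}" unfolding S_def by (auto simp: le_nat_iff) linarith
  qed simp
  define j0 where "j0 = Min S"
  have j0S: "j0 \<in> S" using False fin unfolding j0_def S_def by (intro Min_in) auto
  have "S \<subseteq> {j0..<j0 + nat \<lceil>b - a\<rceil>}"
  proof
    fix j
    assume j: "j \<in> S"
    have "j0 \<le> j" using j fin unfolding j0_def by simp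
    moreover have "real j < real j0 + (b - a)" using j j0S unfolding S_def by auto
    then have "real j < real j0 + real (nat \<lceil>b - a\<rceil>)" by linarith
    ultimately show "j \<in> {j0..<j0 + nat \<lceil>b - a\<rceil>}" by simp
  qed
  then have "card S \<le> nat \<lceil>b - a\<rceil>"
    by (metis card_atLeastLessThan card_mono diff_add_inverse finite_atLeastLessThan)
  then have "real (card S) \<le> real (nat \<lceil>b - a\<rceil>)" by simp
  also have "\<dots> \<le> \<bar>b - a\<bar> + 1" by linarith
  finally show ?thesis unfolding S_def .
qed

definition dyadic_window :: "real \<Rightarrow> real \<Rightarrow> nat \<Rightarrow> real" where
  "dyadic_window Y a m = (if Y < a \<and> a < 2 * Y then 1 / a^(m+1) else 0)"

text \<open>At most \<open>Y/x\<^sub>0 + 1\<close> multiples of \<open>x\<^sub>0\<close> lie in \<open>(Y, 2Y)\<close>, each contributing at most \<open>Y\<^sup>-\<^sup>m\<^sup>-\<^sup>1\<close>.\<close>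
lemma sum_dyadic_window_le:
  fixes x0 Y :: real
  assumes x0: "x0 > 0" and Y: "Y \<ge> 0"
  shows "(\<Sum>j<J. dyadic_window Y (x0 * real (Suc j)) m) \<le> 3 * 2^m / x0^(m+1)"
    (is "?L \<le> _")
proof (cases "2 * Y \<le> x0")
  case True
  have "?L = 0"
  proof (intro sum.neutral ballI)
    fix j
    have "x0 * 1 \<le> x0 * real (Suc j)" using x0 by (intro mult_left_mono) auto
    then show "dyadic_window Y (x0 * real (Suc j)) m = 0"
      using True by (auto simp: dyadic_window_def)
  qed
  then show ?thesis using x0 by simp
next
  case False
  then have Yb: "x0 < 2 * Y" by simp
  then have Y0: "Y > 0" using x0 by simp
  define S where "S = {j\<in>{..<J}. Y < x0 * real (Suc j) \<and> x0 * real (Suc j) < 2 * Y}"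
  have "?L = (\<Sum>j\<in>S. 1 / (x0 * real (Suc j))^(m+1))"
    unfolding S_def dyadic_window_def by (rule sum.inter_filter[symmetric]) simp
  also have "\<dots> \<le> (\<Sum>j\<in>S. 1 / Y^(m+1))"
  proof (intro sum_mono)
    fix j
    assume "j \<in> S"
    then have "Y < x0 * real (Suc j)" by (simp add: S_def)
    then show "1 / (x0 * real (Suc j))^(m+1) \<le> 1 / Y^(m+1)"
      using Y0 by (intro divide_left_mono power_mono) auto
  qed
  also have "\<dots> = real (card S) / Y^(m+1)" by simp
  also have "\<dots> \<le> (Y / x0 + 1) / Y^(m+1)"
  proof (intro divide_right_mono)
    let ?T = "{j::nat. Y / x0 - 1 < real j \<and> real j < 2 * Y / x0 - 1}"
    have "finite ?T"
      by (rule finite_subset[of _ "{..nat \<lceil>2 * Y / x0\<rceil>}"]) (auto simp: le_nat_iff, linarith)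
    moreover have "S \<subseteq> ?T"
      unfolding S_def using x0 by (auto simp: field_simps)
    ultimately have "real (card S) \<le> real (card ?T)"
      by (simp add: card_mono)
    also have "\<dots> \<le> \<bar>(2 * Y / x0 - 1) - (Y / x0 - 1)\<bar> + 1"
      by (rule card_nat_between_le)
    finally show "real (card S) \<le> Y / x0 + 1"
      using x0 Y by simp
  qed (use Y0 in simp)
  also have "\<dots> = 1 / (x0 * Y^m) + (1 / Y)^(m+1)"
    using x0 Y0 by (simp add: field_simps)
  also have "\<dots> \<le> 2^m / x0^(m+1) + 2^(m+1) / x0^(m+1)"
  proof (intro add_mono)
    have iY: "1 / Y \<le> 2 / x0" using Yb x0 Y0 by (simp add: field_simps)
    have "(1 / Y)^m \<le> (2 / x0)^m" using iY Y0 by (intro power_mono) auto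
    then show "1 / (x0 * Y^m) \<le> 2^m / x0^(m+1)"
      using x0 Y0 by (simp add: power_divide field_simps)
    have "(1 / Y)^(m+1) \<le> (2 / x0)^(m+1)" using iY Y0 by (intro power_mono) auto
    then show "(1 / Y)^(m+1) \<le> 2^(m+1) / x0^(m+1)"
      by (simp add: power_divide)
  qed
  also have "\<dots> = 3 * 2^m / x0^(m+1)" by (simp add: field_simps)
  finally show ?thesis .
qed

definition omega_deriv :: "nat \<Rightarrow> real \<Rightarrow> real" where
  "omega_deriv m z = 4 / c0 * (4^m * omega0_deriv m (4 * z + -3))"

lemma deriv_seq_omega_deriv: "deriv_seq omega_deriv"
  unfolding omega_deriv_def[abs_def]
  by (intro deriv_seq_cmult deriv_seq_affine deriv_seq_omega0_deriv)

lemma omega_deriv_0: "omega_deriv 0 = omega"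
  by (simp add: fun_eq_iff omega_deriv_def omega_def omega0_deriv_0)

lemma omega_deriv_eq_0: "z \<le> 1/2 \<or> z \<ge> 1 \<Longrightarrow> omega_deriv m z = 0"
  unfolding omega_deriv_def by (subst omega0_deriv_eq_0) auto

lemma omega_eq_0: "z \<le> 1/2 \<or> z \<ge> 1 \<Longrightarrow> omega z = 0"
  using omega_deriv_eq_0[of z 0] by (simp add: omega_deriv_0)

lemma omega_deriv_bounded: "\<exists>K\<ge>0. \<forall>z. \<bar>omega_deriv m z\<bar> \<le> K"
proof -
  obtain C where C: "\<And>x. \<bar>omega0_deriv m x\<bar> \<le> C"
    using omega0_deriv_bounded by blast
  have "\<bar>omega_deriv m z\<bar> \<le> \<bar>4/c0\<bar> * (4^m * C)" for z
  proof -
    have "\<bar>omega_deriv m z\<bar> = \<bar>4/c0\<bar> * (4^m * \<bar>omega0_deriv m (4 * z + -3)\<bar>)"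
      by (simp add: omega_deriv_def abs_mult)
    also have "\<dots> \<le> \<bar>4/c0\<bar> * (4^m * C)"
      by (intro mult_left_mono C) auto
    finally show ?thesis .
  qed
  moreover have "0 \<le> \<bar>4/c0\<bar> * (4^m * C)"
    using C[of 0] by (intro mult_nonneg_nonneg) auto
  ultimately show ?thesis by blast
qed

text \<open>The derivatives of the \<open>j\<close>-th summand of \<open>h(x\<^sub>0, \<cdot>)\<close>, where \<open>\<omega>(|y|/a)\<close> is split as
  \<open>\<omega>(y/a) + \<omega>(-y/a)\<close> to make it smooth in \<open>y\<close>.\<close>
definition h_term_deriv :: "real \<Rightarrow> nat \<Rightarrow> nat \<Rightarrow> real \<Rightarrow> real" where
  "h_term_deriv x0 j m y =
     (if m = 0 then omega (x0 * real (Suc j)) / (x0 * real (Suc j)) else 0)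
     + (-1 / (x0 * real (Suc j))) *
       ((1 / (x0 * real (Suc j)))^m * omega_deriv m (1 / (x0 * real (Suc j)) * y + 0)
        + (-1 / (x0 * real (Suc j)))^m * omega_deriv m ((-1 / (x0 * real (Suc j))) * y + 0))"

definition h_trunc_deriv :: "real \<Rightarrow> nat \<Rightarrow> nat \<Rightarrow> real \<Rightarrow> real" where
  "h_trunc_deriv x0 J m y = (\<Sum>j<J. h_term_deriv x0 j m y)"

lemma deriv_seq_h_trunc_deriv: "deriv_seq (h_trunc_deriv x0 J)"
  unfolding h_trunc_deriv_def[abs_def] h_term_deriv_def[abs_def]
  by (intro deriv_seq_sum deriv_seq_add deriv_seq_const deriv_seq_cmult deriv_seq_affine
      deriv_seq_omega_deriv)

text \<open>Only the summands with \<open>x\<^sub>0(j+1) \<in> (1/2, 1)\<close> or \<open>x\<^sub>0(j+1) \<in> (|y|, 2|y|)\<close> are nonzero.\<close>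
lemma abs_h_term_deriv_le:
  assumes x0: "x0 > 0" and Kw: "\<And>z. \<bar>omega z\<bar> \<le> Kw" and Kd: "\<And>z. \<bar>omega_deriv m z\<bar> \<le> Kd"
  shows "\<bar>h_term_deriv x0 j m y\<bar> \<le>
      (if m = 0 then Kw * dyadic_window (1/2) (x0 * real (Suc j)) 0 else 0)
      + 2 * Kd * dyadic_window \<bar>y\<bar> (x0 * real (Suc j)) m"
proof -
  define a where "a = x0 * real (Suc j)"
  have a0: "a > 0" using x0 by (simp add: a_def)
  have t1: "\<bar>(if m = 0 then omega a / a else 0)\<bar> \<le> (if m = 0 then Kw * dyadic_window (1/2) a 0 else 0)"
  proof (cases "1/2 < a \<and> a < 1")
    case True
    then show ?thesis
      using Kw[of a] a0 by (simp add: dyadic_window_def abs_divide divide_right_mono)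
  next
    case False
    then show ?thesis
      using omega_eq_0[of a] Kw[of 0] by (auto simp: dyadic_window_def)
  qed
  have t2: "\<bar>(-1 / a) * ((s / a)^m * omega_deriv m (s / a * y + 0))\<bar> \<le> Kd * dyadic_window \<bar>y\<bar> a m"
    if s: "s = 1 \<or> s = -1" for s
  proof (cases "\<bar>y\<bar> < a \<and> a < 2 * \<bar>y\<bar>")
    case True
    have "\<bar>(-1 / a) * ((s / a)^m * omega_deriv m (s / a * y + 0))\<bar> = \<bar>omega_deriv m (s * y / a)\<bar> / a^(m+1)"
      using a0 s by (auto simp: abs_mult power_abs abs_divide power_one_over)
    also have "\<dots> \<le> Kd / a^(m+1)"
      using a0 Kd by (intro divide_right_mono) auto
    finally show ?thesis using True by (simp add: dyadic_window_def)
  next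
    case False
    then have "s / a * y + 0 \<le> 1/2 \<or> s / a * y + 0 \<ge> 1"
      using a0 s by (auto simp: field_simps abs_if split: if_splits)
    then show ?thesis
      using False omega_deriv_eq_0 by (auto simp: dyadic_window_def)
  qed
  have "h_term_deriv x0 j m y = (if m = 0 then omega a / a else 0)
     + ((-1 / a) * ((1 / a)^m * omega_deriv m (1 / a * y + 0))
     + (-1 / a) * ((-1 / a)^m * omega_deriv m (-1 / a * y + 0)))"
    unfolding h_term_deriv_def a_def[symmetric] by (simp only: distrib_left)
  then have "\<bar>h_term_deriv x0 j m y\<bar> \<le> \<bar>(if m = 0 then omega a / a else 0)\<bar>
     + \<bar>(-1 / a) * ((1 / a)^m * omega_deriv m (1 / a * y + 0))\<bar>
     + \<bar>(-1 / a) * ((-1 / a)^m * omega_deriv m (-1 / a * y + 0))\<bar>"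
    by (smt (verit, best) abs_triangle_ineq)
  also have "\<dots> \<le> (if m = 0 then Kw * dyadic_window (1/2) a 0 else 0)
      + Kd * dyadic_window \<bar>y\<bar> a m + Kd * dyadic_window \<bar>y\<bar> a m"
    using t1 t2[of 1] t2[of "-1"] by linarith
  finally show ?thesis unfolding a_def by simp
qed

lemma h_trunc_deriv_bounded:
  "\<exists>K. \<forall>m x0 J y. x0 > 0 \<longrightarrow> \<bar>h_trunc_deriv x0 J m y\<bar> \<le> K m / x0^(m+1)"
proof -
  have "\<exists>K. \<forall>x0 J y. x0 > 0 \<longrightarrow> \<bar>h_trunc_deriv x0 J m y\<bar> \<le> K / x0^(m+1)" for m
  proof -
    obtain Kw where Kw: "Kw \<ge> 0" "\<And>z. \<bar>omega z\<bar> \<le> Kw"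
      using omega_deriv_bounded[of 0] by (auto simp: omega_deriv_0)
    obtain Kd where Kd: "Kd \<ge> 0" "\<And>z. \<bar>omega_deriv m z\<bar> \<le> Kd"
      using omega_deriv_bounded by blast
    define K where "K = 3 * Kw + 2 * Kd * (3 * 2^m)"
    have "\<bar>h_trunc_deriv x0 J m y\<bar> \<le> K / x0^(m+1)" if x0: "x0 > 0" for x0 J y
    proof -
      let ?W = "\<lambda>Y m. \<Sum>j<J. dyadic_window Y (x0 * real (Suc j)) m"
      have "\<bar>h_trunc_deriv x0 J m y\<bar> \<le> (\<Sum>j<J. \<bar>h_term_deriv x0 j m y\<bar>)"
        unfolding h_trunc_deriv_def by (rule sum_abs)
      also have "\<dots> \<le> (\<Sum>j<J. (if m = 0 then Kw * dyadic_window (1/2) (x0 * real (Suc j)) 0 else 0)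
          + 2 * Kd * dyadic_window \<bar>y\<bar> (x0 * real (Suc j)) m)"
        by (intro sum_mono abs_h_term_deriv_le x0 Kw Kd)
      also have "\<dots> = (if m = 0 then Kw * ?W (1/2) 0 else 0) + 2 * Kd * ?W \<bar>y\<bar> m"
        by (simp add: sum.distrib sum_distrib_left)
      also have "\<dots> \<le> (if m = 0 then Kw * (3 / x0) else 0) + 2 * Kd * (3 * 2^m / x0^(m+1))"
        using mult_left_mono[OF sum_dyadic_window_le[OF x0, where Y="1/2" and J=J and m=0] Kw(1)]
          mult_left_mono[OF sum_dyadic_window_le[OF x0, where Y="\<bar>y\<bar>" and J=J and m=m], of "2 * Kd"] Kd(1)
        by (intro add_mono) auto
      also have "\<dots> \<le> K / x0^(m+1)"
        using x0 Kw Kd by (auto simp: K_def field_simps)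
      finally show ?thesis .
    qed
    then show ?thesis by blast
  qed
  then show ?thesis by metis
qed

lemma h_fun_eq_h_trunc_deriv:
  assumes x0: "x0 > 0"
    and J: "\<And>j. j \<ge> J \<Longrightarrow> x0 * real (Suc j) \<ge> 1 \<and> 2 * \<bar>y\<bar> < x0 * real (Suc j)"
  shows "h_fun x0 y = h_trunc_deriv x0 J 0 y"
proof -
  define f where "f j = 1 / (x0 * real (Suc j)) *
      (omega (x0 * real (Suc j)) - omega (\<bar>y\<bar> / (x0 * real (Suc j))))" for j
  have "f j = 0" if "j \<notin> {..<J}" for j
  proof -
    have a: "x0 * real (Suc j) \<ge> 1" "2 * \<bar>y\<bar> < x0 * real (Suc j)"
      using J[of j] that by auto
    then have "omega (\<bar>y\<bar> / (x0 * real (Suc j))) = 0"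
      using x0 by (intro omega_eq_0) (auto simp: field_simps)
    then show ?thesis using a by (simp add: f_def omega_eq_0)
  qed
  then have "h_fun x0 y = sum f {..<J}"
    unfolding h_fun_def f_def[symmetric] by (intro suminf_finite) auto
  also have "\<dots> = h_trunc_deriv x0 J 0 y"
    unfolding h_trunc_deriv_def
  proof (intro sum.cong refl)
    fix j
    define a where "a = x0 * real (Suc j)"
    have a0: "a > 0" using x0 by (simp add: a_def)
    have "omega (\<bar>y\<bar> / a) = omega (y / a) + omega (-y / a)"
      using omega_eq_0[of "y/a"] omega_eq_0[of "-y/a"] a0
      by (cases "y \<ge> 0") (auto simp: field_simps)
    then show "f j = h_term_deriv x0 j 0 y"
      unfolding f_def h_term_deriv_def a_def[symmetric] using a0 by (simp add: omega_deriv_0 field_simps)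
  qed
  finally show ?thesis .
qed

section \<open>Oscillatory integrals over \<open>\<real>\<^sup>n\<^sup>+\<^sup>1\<close>\<close>

abbreviation lborel_Pi :: "nat \<Rightarrow> (nat \<Rightarrow> real) measure" where
  "lborel_Pi n \<equiv> PiM {0..n} (\<lambda>_. lborel)"

definition shift_coord :: "nat \<Rightarrow> real \<Rightarrow> (nat \<Rightarrow> real) \<Rightarrow> (nat \<Rightarrow> real)" where
  "shift_coord k d u = (\<lambda>i. if i = k then u k + d else u i)"

lemma shift_coord_eq: "shift_coord k d u = u(k := u k + d)"
  by (auto simp: shift_coord_def)

lemma measurable_shift_coord: "k \<le> n \<Longrightarrow> shift_coord k d \<in> measurable (lborel_Pi n) (lborel_Pi n)"
  unfolding shift_coord_def
proof (rule measurable_PiM_single'[where f="\<lambda>i u. if i = k then u k + d else u i"])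
  fix i
  assume "i \<in> {0..n}" "k \<le> n"
  then show "(\<lambda>u. if i = k then u k + d else u i) \<in> measurable (lborel_Pi n) lborel"
    by (cases "i = k") auto
next
  assume "k \<le> n"
  then show "(\<lambda>u i. if i = k then u k + d else u i) \<in> space (lborel_Pi n) \<rightarrow> (\<Pi>\<^sub>E i\<in>{0..n}. space lborel)"
    by (auto simp: space_PiM PiE_def extensional_def)
qed

lemma emeasure_lborel_translate:
  fixes A :: "real set"
  assumes "A \<in> sets borel"
  shows "emeasure lborel {x. x + d \<in> A} = emeasure lborel A"
proof -
  have "emeasure lborel A = emeasure (distr lborel borel ((+) d)) A"
    by (simp add: lborel_distr_plus)
  also have "\<dots> = emeasure lborel (((+) d) -` A \<inter> space lborel)"
    using assms by (intro emeasure_distr) auto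
  also have "((+) d) -` A \<inter> space lborel = {x. x + d \<in> A}"
    by (auto simp: add.commute)
  finally show ?thesis by simp
qed

lemma distr_shift_coord:
  assumes k: "k \<le> n"
  shows "distr (lborel_Pi n) (lborel_Pi n) (shift_coord k d) = lborel_Pi n"
proof -
  interpret product_sigma_finite "\<lambda>_::nat. lborel :: real measure" by standard
  show ?thesis
  proof (rule PiM_eqI)
    fix A
    assume A: "\<And>i. i \<in> {0..n} \<Longrightarrow> A i \<in> sets (lborel :: real measure)"
    define A' where "A' i = (if i = k then {x. x + d \<in> A k} else A i)" for i
    have A'm: "A' i \<in> sets lborel" if "i \<in> {0..n}" for i
    proof -
      have "A k \<in> sets borel" using A k by auto
      then have "{x. x + d \<in> A k} \<in> sets borel" by measurable
      then show ?thesis using A[OF that] by (auto simp: A'_def)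
    qed
    have "emeasure (distr (lborel_Pi n) (lborel_Pi n) (shift_coord k d)) (Pi\<^sub>E {0..n} A)
        = emeasure (lborel_Pi n) (shift_coord k d -` Pi\<^sub>E {0..n} A \<inter> space (lborel_Pi n))"
      using A by (intro emeasure_distr measurable_shift_coord k sets_PiM_I_finite) auto
    also have "shift_coord k d -` Pi\<^sub>E {0..n} A \<inter> space (lborel_Pi n) = Pi\<^sub>E {0..n} A'"
      using k by (auto simp: shift_coord_def A'_def space_PiM PiE_def extensional_def Pi_def
          split: if_splits)
    also have "emeasure (lborel_Pi n) (Pi\<^sub>E {0..n} A') = (\<Prod>i\<in>{0..n}. emeasure lborel (A' i))"
      by (intro emeasure_PiM A'm) auto
    also have "\<dots> = (\<Prod>i\<in>{0..n}. emeasure lborel (A i))"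
      using A by (intro prod.cong refl) (auto simp: A'_def intro!: emeasure_lborel_translate)
    finally show "emeasure (distr (lborel_Pi n) (lborel_Pi n) (shift_coord k d)) (Pi\<^sub>E {0..n} A)
        = (\<Prod>i\<in>{0..n}. emeasure lborel (A i))" .
  qed simp_all
qed

lemma integral_shift_coord:
  fixes f :: "(nat \<Rightarrow> real) \<Rightarrow> 'b::{banach, second_countable_topology}"
  assumes k: "k \<le> n" and f: "f \<in> borel_measurable (lborel_Pi n)"
  shows "integral\<^sup>L (lborel_Pi n) (\<lambda>u. f (shift_coord k d u)) = integral\<^sup>L (lborel_Pi n) f"
  using integral_distr[OF measurable_shift_coord[OF k] f, of d] by (simp add: distr_shift_coord[OF k])

lemma integrable_shift_coord:
  fixes f :: "(nat \<Rightarrow> real) \<Rightarrow> 'b::{banach, second_countable_topology}"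
  assumes k: "k \<le> n" and f: "integrable (lborel_Pi n) f"
  shows "integrable (lborel_Pi n) (\<lambda>u. f (shift_coord k d u))"
proof -
  have "integrable (distr (lborel_Pi n) (lborel_Pi n) (shift_coord k d)) f"
    using f by (simp add: distr_shift_coord[OF k])
  then show ?thesis
    by (subst (asm) integrable_distr_eq) (use measurable_shift_coord[OF k] f in auto)
qed

definition unit_cube :: "nat \<Rightarrow> (nat \<Rightarrow> real) set" where
  "unit_cube n = Pi\<^sub>E {0..n} (\<lambda>_. {-1..1})"

lemma unit_cube_sets: "unit_cube n \<in> sets (lborel_Pi n)"
  unfolding unit_cube_def by (intro sets_PiM_I_finite) auto

lemma emeasure_unit_cube: "emeasure (lborel_Pi n) (unit_cube n) = ennreal (2^(n+1))"
proof -
  interpret product_sigma_finite "\<lambda>_::nat. lborel :: real measure" by standard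
  have "emeasure (lborel_Pi n) (unit_cube n) = (\<Prod>i\<in>{0..n}. emeasure lborel {-1..1::real})"
    unfolding unit_cube_def by (intro emeasure_PiM) auto
  also have "\<dots> = ennreal 2 ^ (n+1)"
    by (simp del: power_Suc)
  also have "\<dots> = ennreal (2^(n+1))"
    by (rule ennreal_power) simp
  finally show ?thesis .
qed

lemma integrable_indicator_unit_cube: "integrable (lborel_Pi n) (indicator (unit_cube n) :: _ \<Rightarrow> real)"
  by (intro integrable_real_indicator unit_cube_sets) (simp add: emeasure_unit_cube)

lemma integral_indicator_unit_cube:
  "integral\<^sup>L (lborel_Pi n) (indicator (unit_cube n) :: _ \<Rightarrow> real) = 2^(n+1)"
  using unit_cube_sets[of n] by (simp add: measure_def emeasure_unit_cube del: power_Suc)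

text \<open>Controls the support of differences in the \<open>k\<close>-th coordinate of a function supported in the
  unit cube, see \<open>abs_slice_fdiff_le_cube_hits\<close>.\<close>
definition cube_hits :: "nat \<Rightarrow> nat \<Rightarrow> real \<Rightarrow> nat \<Rightarrow> (nat \<Rightarrow> real) \<Rightarrow> real" where
  "cube_hits n k d m u = (\<Sum>i\<le>m. indicator (unit_cube n) (shift_coord k (real i * d) u))"

lemma cube_hits_nonneg: "cube_hits n k d m u \<ge> 0"
  by (simp add: cube_hits_def sum_nonneg)

lemma integrable_cube_hits: "k \<le> n \<Longrightarrow> integrable (lborel_Pi n) (cube_hits n k d m)"
  unfolding cube_hits_def[abs_def]
  by (intro Bochner_Integration.integrable_sum integrable_shift_coord integrable_indicator_unit_cube)

lemma integral_cube_hits: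
  assumes k: "k \<le> n"
  shows "integral\<^sup>L (lborel_Pi n) (cube_hits n k d m) = (real m + 1) * 2^(n+1)"
proof -
  have "integral\<^sup>L (lborel_Pi n) (cube_hits n k d m)
      = (\<Sum>i\<le>m. integral\<^sup>L (lborel_Pi n) (\<lambda>u. indicator (unit_cube n) (shift_coord k (real i * d) u) :: real))"
    unfolding cube_hits_def[abs_def]
    by (intro Bochner_Integration.integral_sum integrable_shift_coord[OF k] integrable_indicator_unit_cube)
  also have "\<dots> = (\<Sum>i\<le>m. integral\<^sup>L (lborel_Pi n) (indicator (unit_cube n) :: _ \<Rightarrow> real))"
    by (intro sum.cong refl integral_shift_coord[OF k] borel_measurable_indicator unit_cube_sets)
  also have "\<dots> = (\<Sum>i\<le>m. 2^(n+1))"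
    by (simp only: integral_indicator_unit_cube)
  finally show ?thesis by simp
qed

definition slice_fdiff :: "nat \<Rightarrow> real \<Rightarrow> nat \<Rightarrow> ((nat \<Rightarrow> real) \<Rightarrow> real) \<Rightarrow> (nat \<Rightarrow> real) \<Rightarrow> real" where
  "slice_fdiff k d m F u = (fdiff d ^^ m) (\<lambda>t. F (u(k := t))) (u k)"

lemma slice_fdiff_0: "slice_fdiff k d 0 F = F"
  by (simp add: slice_fdiff_def fun_eq_iff)

lemma slice_fdiff_Suc:
  "slice_fdiff k d (Suc m) F u = slice_fdiff k d m F u - slice_fdiff k d m F (shift_coord k d u)"
  by (simp only: slice_fdiff_def fdiff_funpow_Suc) (simp add: shift_coord_eq)

lemma slice_fdiff_measurable:
  assumes "k \<le> n" and "F \<in> borel_measurable (lborel_Pi n)"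
  shows "slice_fdiff k d m F \<in> borel_measurable (lborel_Pi n)"
proof (induction m)
  case 0
  then show ?case using assms(2) by (simp add: slice_fdiff_0)
next
  case (Suc m)
  then have "(\<lambda>u. slice_fdiff k d m F (shift_coord k d u)) \<in> borel_measurable (lborel_Pi n)"
    using measurable_compose[OF measurable_shift_coord[OF assms(1)]] by blast
  with Suc show ?case by (simp add: slice_fdiff_Suc[abs_def])
qed

lemma abs_slice_fdiff_le_cube_hits:
  assumes k: "k \<le> n" and u: "u \<in> space (lborel_Pi n)"
    and supp: "\<And>v. v \<in> space (lborel_Pi n) \<Longrightarrow> F v \<noteq> 0 \<Longrightarrow> v \<in> unit_cube n"
    and K: "\<bar>slice_fdiff k d m F u\<bar> \<le> K"
  shows "\<bar>slice_fdiff k d m F u\<bar> \<le> K * cube_hits n k d m u"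
proof (cases "slice_fdiff k d m F u = 0")
  case True
  then show ?thesis using K cube_hits_nonneg[of n k d m u] by simp
next
  case False
  then obtain i where i: "i \<le> m" "F (shift_coord k (real i * d) u) \<noteq> 0"
    using fdiff_funpow_nonzero[where d=d and m=m] unfolding slice_fdiff_def shift_coord_eq by blast
  have "shift_coord k (real i * d) u \<in> space (lborel_Pi n)"
    using u k by (auto simp: shift_coord_def space_PiM PiE_def extensional_def)
  then have "shift_coord k (real i * d) u \<in> unit_cube n"
    using i supp by blast
  then have "1 \<le> cube_hits n k d m u"
    unfolding cube_hits_def using i
    by (intro order_trans[OF _ member_le_sum[of i]]) auto
  then show ?thesis
    using K mult_left_mono[of 1 "cube_hits n k d m u" K] by linarith
qed

text \<open>A discrete integration by parts: if the shift by \<open>d e\<^sub>k\<close> changes the sign of \<open>E\<close>, then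
  \<open>\<integral> g E = \<integral> g(\<cdot> + d e\<^sub>k) E(\<cdot> + d e\<^sub>k) = - \<integral> g(\<cdot> + d e\<^sub>k) E\<close>.\<close>
lemma integral_antiperiodic_half:
  fixes g :: "(nat \<Rightarrow> real) \<Rightarrow> real" and E :: "(nat \<Rightarrow> real) \<Rightarrow> complex"
  assumes k: "k \<le> n" and E: "\<And>u. E (shift_coord k d u) = - E u"
    and int: "integrable (lborel_Pi n) (\<lambda>u. of_real (g u) * E u)"
  shows "integral\<^sup>L (lborel_Pi n) (\<lambda>u. of_real (g u) * E u)
       = 1/2 * integral\<^sup>L (lborel_Pi n) (\<lambda>u. of_real (g u - g (shift_coord k d u)) * E u)"
proof -
  let ?f = "\<lambda>u. of_real (g u) * E u"
  let ?f' = "\<lambda>u. of_real (g (shift_coord k d u)) * E u"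
  have "integral\<^sup>L (lborel_Pi n) ?f = integral\<^sup>L (lborel_Pi n) (\<lambda>u. ?f (shift_coord k d u))"
    using int by (intro integral_shift_coord[OF k, symmetric]) auto
  also have "\<dots> = - integral\<^sup>L (lborel_Pi n) ?f'"
    by (simp add: E)
  finally have shifted: "integral\<^sup>L (lborel_Pi n) ?f = - integral\<^sup>L (lborel_Pi n) ?f'" .
  have "integrable (lborel_Pi n) (\<lambda>u. - ?f (shift_coord k d u))"
    by (intro integrable_minus integrable_shift_coord[OF k int])
  then have "integrable (lborel_Pi n) ?f'"
    by (simp add: E)
  then have "integral\<^sup>L (lborel_Pi n) (\<lambda>u. ?f u - ?f' u)
      = integral\<^sup>L (lborel_Pi n) ?f - integral\<^sup>L (lborel_Pi n) ?f'"
    by (rule Bochner_Integration.integral_diff[OF int])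
  moreover have "(\<lambda>u. of_real (g u - g (shift_coord k d u)) * E u) = (\<lambda>u. ?f u - ?f' u)"
    by (simp add: fun_eq_iff algebra_simps)
  ultimately show ?thesis
    using shifted by simp
qed

lemma integrable_mult_le_cube_hits:
  fixes g :: "(nat \<Rightarrow> real) \<Rightarrow> real" and E :: "(nat \<Rightarrow> real) \<Rightarrow> complex"
  assumes k: "k \<le> n" and g: "g \<in> borel_measurable (lborel_Pi n)"
    and E: "E \<in> borel_measurable (lborel_Pi n)" and E_norm: "\<And>u. norm (E u) \<le> 1"
    and g_le: "\<And>u. u \<in> space (lborel_Pi n) \<Longrightarrow> \<bar>g u\<bar> \<le> K * cube_hits n k d m u"
  shows "integrable (lborel_Pi n) (\<lambda>u. of_real (g u) * E u)"
proof (rule Bochner_Integration.integrable_bound[where f="\<lambda>u. K * cube_hits n k d m u"])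
  show "integrable (lborel_Pi n) (\<lambda>u. K * cube_hits n k d m u)"
    using integrable_cube_hits[OF k] by auto
  show "(\<lambda>u. of_real (g u) * E u) \<in> borel_measurable (lborel_Pi n)"
    using g E by measurable
  show "AE u in lborel_Pi n. norm (of_real (g u) * E u) \<le> norm (K * cube_hits n k d m u)"
  proof (rule AE_I2)
    fix u
    assume "u \<in> space (lborel_Pi n)"
    then have "norm (of_real (g u) * E u) \<le> K * cube_hits n k d m u"
      using E_norm[of u] g_le[of u] mult_left_le[of "norm (E u)" "\<bar>g u\<bar>"] by (simp add: norm_mult)
    then show "norm (of_real (g u) * E u) \<le> norm (K * cube_hits n k d m u)"
      by simp
  qed
qed

lemma norm_integral_mult_le_cube_hits:
  fixes g :: "(nat \<Rightarrow> real) \<Rightarrow> real" and E :: "(nat \<Rightarrow> real) \<Rightarrow> complex"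
  assumes k: "k \<le> n" and E_norm: "\<And>u. norm (E u) \<le> 1"
    and g_le: "\<And>u. u \<in> space (lborel_Pi n) \<Longrightarrow> \<bar>g u\<bar> \<le> K * cube_hits n k d m u"
  shows "norm (integral\<^sup>L (lborel_Pi n) (\<lambda>u. of_real (g u) * E u)) \<le> K * ((real m + 1) * 2^(n+1))"
proof -
  have "norm (integral\<^sup>L (lborel_Pi n) (\<lambda>u. of_real (g u) * E u))
      \<le> integral\<^sup>L (lborel_Pi n) (\<lambda>u. norm (of_real (g u) * E u))"
    by (rule integral_norm_bound)
  also have "\<dots> \<le> integral\<^sup>L (lborel_Pi n) (\<lambda>u. K * cube_hits n k d m u)"
  proof (rule integral_mono')
    show "integrable (lborel_Pi n) (\<lambda>u. K * cube_hits n k d m u)"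
      using integrable_cube_hits[OF k] by auto
    fix u
    assume "u \<in> space (lborel_Pi n)"
    then show "norm (of_real (g u) * E u) \<le> K * cube_hits n k d m u"
      using E_norm[of u] g_le[of u] mult_left_le[of "norm (E u)" "\<bar>g u\<bar>"] by (simp add: norm_mult)
    then show "0 \<le> K * cube_hits n k d m u"
      using norm_ge_zero order_trans by blast
  qed
  also have "\<dots> = K * ((real m + 1) * 2^(n+1))"
    by (simp add: integral_cube_hits[OF k])
  finally show ?thesis .
qed

theorem integral_antiperiodic_decay:
  fixes E :: "(nat \<Rightarrow> real) \<Rightarrow> complex" and F :: "(nat \<Rightarrow> real) \<Rightarrow> real"
  assumes k: "k \<le> n"
    and E_meas: "E \<in> borel_measurable (lborel_Pi n)"
    and E_shift: "\<And>u. E (shift_coord k d u) = - E u"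
    and E_norm: "\<And>u. norm (E u) \<le> 1"
    and F_meas: "F \<in> borel_measurable (lborel_Pi n)"
    and F_bounded: "\<And>u. \<bar>F u\<bar> \<le> MF"
    and F_supp: "\<And>u. u \<in> space (lborel_Pi n) \<Longrightarrow> F u \<noteq> 0 \<Longrightarrow> u \<in> unit_cube n"
    and F_deriv: "\<And>u. \<exists>D. deriv_seq D \<and> D 0 = (\<lambda>t. F (u(k := t))) \<and> (\<forall>t. \<bar>D N t\<bar> \<le> M)"
  shows "norm (integral\<^sup>L (lborel_Pi n) (\<lambda>u. of_real (F u) * E u))
           \<le> (1/2)^N * (\<bar>d\<bar>^N * M) * (real N + 1) * 2^(n+1)"
proof -
  let ?G = "\<lambda>m. slice_fdiff k d m F"
  have G_bounded: "\<bar>?G m u\<bar> \<le> 2^m * MF" for m u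
    unfolding slice_fdiff_def by (rule abs_fdiff_funpow_le_sup) (rule F_bounded)
  have "\<bar>?G m u\<bar> \<le> 2^m * MF * cube_hits n k d m u" if "u \<in> space (lborel_Pi n)" for m u
    by (rule abs_slice_fdiff_le_cube_hits[OF k that F_supp G_bounded])
  then have integrable: "integrable (lborel_Pi n) (\<lambda>u. of_real (?G m u) * E u)" for m
    by (rule integrable_mult_le_cube_hits[OF k slice_fdiff_measurable[OF k F_meas] E_meas E_norm])
  have halves: "integral\<^sup>L (lborel_Pi n) (\<lambda>u. of_real (F u) * E u)
      = (1/2)^m * integral\<^sup>L (lborel_Pi n) (\<lambda>u. of_real (?G m u) * E u)" for m
  proof (induction m)
    case (Suc m)
    then show ?case
      using integral_antiperiodic_half[where E=E and d=d, OF k E_shift integrable[of m]]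
      by (simp add: slice_fdiff_Suc)
  qed (simp add: slice_fdiff_0)
  have "\<bar>?G N u\<bar> \<le> (\<bar>d\<bar>^N * M) * cube_hits n k d N u" if u: "u \<in> space (lborel_Pi n)" for u
  proof (rule abs_slice_fdiff_le_cube_hits[OF k u F_supp])
    obtain D where D: "deriv_seq D" "D 0 = (\<lambda>t. F (u(k := t)))" "\<And>t. \<bar>D N t\<bar> \<le> M"
      using F_deriv[of u] by blast
    show "\<bar>?G N u\<bar> \<le> \<bar>d\<bar>^N * M"
      unfolding slice_fdiff_def D(2)[symmetric] by (rule abs_fdiff_funpow_le[OF D(1) D(3)])
  qed
  then have "norm (integral\<^sup>L (lborel_Pi n) (\<lambda>u. of_real (?G N u) * E u))
      \<le> (\<bar>d\<bar>^N * M) * ((real N + 1) * 2^(n+1))"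
    by (rule norm_integral_mult_le_cube_hits[OF k E_norm])
  then show ?thesis
    unfolding halves[of N] norm_mult
    by (simp add: norm_power mult_left_mono mult.assoc)
qed

section \<open>The bound for \<open>I(c)\<close>\<close>

lemma e_char_minus_half: "e_char (a - 1/2) = - e_char a"
proof -
  have "e_char (a - 1/2) = e_char a * exp (- (pi * \<i>))"
    by (simp add: e_char_def algebra_simps exp_add[symmetric])
  then show ?thesis by (simp add: exp_minus exp_pi_i')
qed

lemma norm_e_char [simp]: "norm (e_char a) = 1"
  by (simp add: e_char_def norm_exp_eq_Re)

lemma sum_fun_upd_remove:
  assumes "k \<in> S" "finite S"
  shows "(\<Sum>j\<in>S. r j * (u(k := t)) j) = r k * t + (\<Sum>j\<in>S - {k}. r j * u j)"
  using assms by (simp add: sum.remove)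

lemma prod_fun_upd_remove:
  assumes "k \<in> S" "finite S"
  shows "(\<Prod>j\<in>S. g ((u(k := t)) j)) = g t * (\<Prod>j\<in>S - {k}. g (u j))"
  using assms by (simp add: prod.remove)

lemma sum_shift_coord:
  assumes "k \<le> n"
  shows "(\<Sum>j\<in>{0..n}. r j * shift_coord k d u j) = (\<Sum>j\<in>{0..n}. r j * u j) + r k * d"
  using assms sum_fun_upd_remove[of k "{0..n}" r u "u k + d"] sum_fun_upd_remove[of k "{0..n}" r u "u k"]
  by (simp add: shift_coord_eq distrib_left)

lemma e_q_shift_coord:
  assumes "k \<le> n" and "q \<noteq> 0" and "P \<noteq> 0" and "c k \<noteq> 0"
  shows "e_q q (- P * (\<Sum>j\<in>{0..n}. c j * shift_coord k (q / (2 * P * c k)) u j))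
       = - e_q q (- P * (\<Sum>j\<in>{0..n}. c j * u j))"
proof -
  have "- P * ((\<Sum>j\<in>{0..n}. c j * u j) + c k * (q / (2 * P * c k))) / q
      = - P * (\<Sum>j\<in>{0..n}. c j * u j) / q - 1/2"
    using assms by (simp add: field_simps)
  then show ?thesis
    by (simp add: e_q_def sum_shift_coord[OF assms(1)] e_char_minus_half)
qed

lemma w_low_nonzero_imp:
  assumes "\<epsilon> > 0" "P > 0" "w_low n \<epsilon> P u \<noteq> 0" "j \<le> n"
  shows "\<bar>u j\<bar> < 1"
proof (rule ccontr)
  assume "\<not> \<bar>u j\<bar> < 1"
  then have "w_factor_deriv \<epsilon> P 0 (u j) = 0"
    using assms(1,2) by (intro w_factor_deriv_0_eq_0) auto
  then show False
    using assms by (simp add: w_low_eq_prod_w_factor prod_zero)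
qed

lemma abs_sum_lt_if_w_low_nonzero:
  assumes "\<epsilon> > 0" "P > 0" "w_low n \<epsilon> P u \<noteq> 0" and a: "\<And>j. j \<le> n \<Longrightarrow> \<bar>a j\<bar> \<le> 1"
  shows "\<bar>\<Sum>j\<in>{0..n}. a j * u j\<bar> < real n + 1"
proof -
  have "\<bar>\<Sum>j\<in>{0..n}. a j * u j\<bar> \<le> (\<Sum>j\<in>{0..n}. \<bar>a j\<bar> * \<bar>u j\<bar>)"
    unfolding abs_mult[symmetric] by (rule sum_abs)
  also have "\<dots> < (\<Sum>j\<in>{0..n}. 1)"
  proof (rule sum_strict_mono)
    fix j
    assume "j \<in> {0..n}"
    then have "\<bar>a j\<bar> * \<bar>u j\<bar> \<le> 1 * \<bar>u j\<bar>"
      using a[of j] by (intro mult_right_mono) auto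
    then show "\<bar>a j\<bar> * \<bar>u j\<bar> < 1"
      using w_low_nonzero_imp[OF assms(1-3), of j] \<open>j \<in> {0..n}\<close> by simp
  qed auto
  finally show ?thesis by simp
qed

lemma w_low_mult_h_fun_eq:
  assumes "\<epsilon> > 0" "P > 0" "x0 > 0" and a: "\<And>j. j \<le> n \<Longrightarrow> \<bar>a j\<bar> \<le> 1"
    and J: "2 * (real n + 1) \<le> x0 * real (Suc J)"
  shows "w_low n \<epsilon> P u * h_fun x0 (\<Sum>j\<in>{0..n}. a j * u j)
       = w_low n \<epsilon> P u * h_trunc_deriv x0 J 0 (\<Sum>j\<in>{0..n}. a j * u j)"
proof (cases "w_low n \<epsilon> P u = 0")
  case False
  have L: "\<bar>\<Sum>j\<in>{0..n}. a j * u j\<bar> < real n + 1"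
    using abs_sum_lt_if_w_low_nonzero[OF assms(1,2) False a] .
  have "h_fun x0 (\<Sum>j\<in>{0..n}. a j * u j) = h_trunc_deriv x0 J 0 (\<Sum>j\<in>{0..n}. a j * u j)"
  proof (rule h_fun_eq_h_trunc_deriv[OF assms(3)])
    fix j
    assume "J \<le> j"
    then have "x0 * real (Suc J) \<le> x0 * real (Suc j)"
      using assms(3) by (intro mult_left_mono) auto
    then have "2 * (real n + 1) \<le> x0 * real (Suc j)"
      using J by (rule order_trans[rotated])
    then show "1 \<le> x0 * real (Suc j) \<and> 2 * \<bar>\<Sum>j\<in>{0..n}. a j * u j\<bar> < x0 * real (Suc j)"
      using L by simp
  qed
  then show ?thesis by simp
qed simp

lemma abs_prod_le_power:
  fixes f :: "'a \<Rightarrow> real"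
  assumes "\<And>j. j \<in> S \<Longrightarrow> \<bar>f j\<bar> \<le> K"
  shows "\<bar>\<Prod>j\<in>S. f j\<bar> \<le> K ^ card S"
proof (cases "finite S")
  case True
  have "\<bar>\<Prod>j\<in>S. f j\<bar> = (\<Prod>j\<in>S. \<bar>f j\<bar>)" by (simp add: abs_prod)
  also have "\<dots> \<le> (\<Prod>j\<in>S. K)" using assms by (intro prod_mono) auto
  finally show ?thesis by simp
qed simp

lemma deriv_seq_w_low_slice:
  fixes a :: "nat \<Rightarrow> real" and H :: "nat \<Rightarrow> real \<Rightarrow> real"
  assumes \<epsilon>: "\<epsilon> > 0" and P: "P > 0" and k: "k \<le> n" and ak: "\<bar>a k\<bar> \<le> 1"
    and H: "deriv_seq H" and KH: "\<And>m y. \<bar>H m y\<bar> \<le> KH m"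
    and K\<psi>: "\<And>m t. \<bar>w_factor_deriv \<epsilon> P m t\<bar> \<le> K\<psi> m"
  shows "\<exists>D. deriv_seq D
    \<and> D 0 = (\<lambda>t. w_low n \<epsilon> P (u(k := t)) * H 0 (\<Sum>j\<in>{0..n}. a j * (u(k := t)) j))
    \<and> (\<forall>t. \<bar>D N t\<bar> \<le> K\<psi> 0 ^ n * (\<Sum>i=0..N. real (N choose i) * K\<psi> i * KH (N - i)))"
proof -
  have kn: "k \<in> {0..n}" using k by simp
  have K\<psi>0: "K\<psi> 0 \<ge> 0" using K\<psi>[of 0 0] by linarith
  define A where "A = (\<Prod>j\<in>{0..n} - {k}. w_factor_deriv \<epsilon> P 0 (u j))"
  define \<beta> where "\<beta> = (\<Sum>j\<in>{0..n} - {k}. a j * u j)"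
  define G where "G = leibniz_prod (w_factor_deriv \<epsilon> P) (\<lambda>m t. a k^m * H m (a k * t + \<beta>))"
  have "deriv_seq (\<lambda>m t. A * G m t)"
    unfolding G_def
    by (intro deriv_seq_cmult deriv_seq_leibniz_prod deriv_seq_w_factor_deriv deriv_seq_affine H)
  moreover have "A * G 0 t = w_low n \<epsilon> P (u(k := t)) * H 0 (\<Sum>j\<in>{0..n}. a j * (u(k := t)) j)" for t
    unfolding w_low_eq_prod_w_factor[OF \<epsilon> P] prod_fun_upd_remove[OF kn finite_atLeastAtMost]
      sum_fun_upd_remove[OF kn finite_atLeastAtMost]
    by (simp add: G_def A_def \<beta>_def mult_ac)
  moreover have "\<bar>A * G N t\<bar> \<le> K\<psi> 0 ^ n * (\<Sum>i=0..N. real (N choose i) * K\<psi> i * KH (N - i))" for t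
  proof -
    have "\<bar>A\<bar> \<le> K\<psi> 0 ^ n"
      using abs_prod_le_power[of "{0..n} - {k}" "\<lambda>j. w_factor_deriv \<epsilon> P 0 (u j)" "K\<psi> 0"] K\<psi> kn
      by (simp add: A_def)
    moreover have "\<bar>a k^m * H m (a k * t + \<beta>)\<bar> \<le> KH m" for m t
      unfolding abs_mult power_abs
      using mult_mono[OF power_le_one[OF _ ak] KH[of m "a k * t + \<beta>"]] by simp
    then have "\<bar>G N t\<bar> \<le> (\<Sum>i=0..N. real (N choose i) * K\<psi> i * KH (N - i))"
      unfolding G_def by (rule abs_leibniz_prod_le[OF K\<psi>])
    ultimately show ?thesis
      unfolding abs_mult by (intro mult_mono) (auto simp: K\<psi>0)
  qed
  ultimately show ?thesis
    by (intro exI[of _ "\<lambda>m t. A * G m t"]) auto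
qed

theorem norm_integral_w_low_decay:
  fixes a c :: "nat \<Rightarrow> real" and H :: "nat \<Rightarrow> real \<Rightarrow> real"
  assumes \<epsilon>: "\<epsilon> > 0" and P: "P > 0" and q: "q > 0" and k: "k \<le> n" and ck: "c k \<noteq> 0"
    and ak: "\<bar>a k\<bar> \<le> 1"
    and H: "deriv_seq H" and KH: "\<And>m y. \<bar>H m y\<bar> \<le> KH m"
    and K\<psi>: "\<And>m t. \<bar>w_factor_deriv \<epsilon> P m t\<bar> \<le> K\<psi> m"
  shows "norm (integral\<^sup>L (lborel_Pi n) (\<lambda>u.
            of_real (w_low n \<epsilon> P u * H 0 (\<Sum>j\<in>{0..n}. a j * u j))
            * e_q q (- P * (\<Sum>j\<in>{0..n}. c j * u j))))
     \<le> (1/2)^N * ((q / (2 * P * \<bar>c k\<bar>))^N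
          * (K\<psi> 0 ^ n * (\<Sum>i=0..N. real (N choose i) * K\<psi> i * KH (N - i))))
        * (real N + 1) * 2^(n+1)"
proof -
  define E where "E u = e_q q (- P * (\<Sum>j\<in>{0..n}. c j * u j))" for u
  define F where "F u = w_low n \<epsilon> P u * H 0 (\<Sum>j\<in>{0..n}. a j * u j)" for u
  define d where "d = q / (2 * P * c k)"
  have K\<psi>0: "K\<psi> 0 \<ge> 0" using K\<psi>[of 0 0] by linarith
  have F_eq: "F u = (\<Prod>j\<in>{0..n}. w_factor_deriv \<epsilon> P 0 (u j)) * H 0 (\<Sum>j\<in>{0..n}. a j * u j)" for u
    by (simp add: F_def w_low_eq_prod_w_factor[OF \<epsilon> P])
  have E_meas: "E \<in> borel_measurable (lborel_Pi n)"
  proof -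
    have "continuous_on UNIV e_char"
      unfolding e_char_def by (intro continuous_intros)
    moreover have "(\<lambda>u. - P * (\<Sum>j\<in>{0..n}. c j * u j) / q) \<in> borel_measurable (lborel_Pi n)"
      by measurable
    ultimately show ?thesis
      unfolding E_def[abs_def] e_q_def by (rule borel_measurable_continuous_on)
  qed
  have E_shift: "E (shift_coord k d u) = - E u" for u
    unfolding E_def d_def using k q P ck by (intro e_q_shift_coord) auto
  have E_norm: "norm (E u) \<le> 1" for u
    by (simp add: E_def e_q_def)
  have F_meas: "F \<in> borel_measurable (lborel_Pi n)"
  proof -
    note [measurable] = deriv_seq_borel_measurable[OF deriv_seq_w_factor_deriv, of \<epsilon> P 0]
      deriv_seq_borel_measurable[OF H, of 0]
    show ?thesis unfolding F_eq[abs_def] by measurable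
  qed
  have F_bounded: "\<bar>F u\<bar> \<le> K\<psi> 0 ^ (n+1) * KH 0" for u
    unfolding F_eq abs_mult
    using abs_prod_le_power[of "{0..n}" "\<lambda>j. w_factor_deriv \<epsilon> P 0 (u j)" "K\<psi> 0"] K\<psi> KH K\<psi>0
    by (intro mult_mono) auto
  have F_supp: "u \<in> unit_cube n" if "u \<in> space (lborel_Pi n)" "F u \<noteq> 0" for u
  proof -
    have "w_low n \<epsilon> P u \<noteq> 0" using that(2) by (auto simp: F_def)
    then have "\<forall>j\<le>n. -1 \<le> u j \<and> u j \<le> 1"
      using w_low_nonzero_imp[OF \<epsilon> P] by (force simp: abs_less_iff)
    then show ?thesis using that(1) by (auto simp: unit_cube_def space_PiM PiE_def Pi_def)
  qed
  have F_deriv: "\<exists>D. deriv_seq D \<and> D 0 = (\<lambda>t. F (u(k := t))) \<and> (\<forall>t. \<bar>D N t\<bar> \<le>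
      K\<psi> 0 ^ n * (\<Sum>i=0..N. real (N choose i) * K\<psi> i * KH (N - i)))" for u
    unfolding F_def by (rule deriv_seq_w_low_slice[where a=a and H=H, OF \<epsilon> P k ak H KH K\<psi>])
  have "\<bar>d\<bar> = q / (2 * P * \<bar>c k\<bar>)"
    using q P by (simp add: d_def abs_divide abs_mult)
  then show ?thesis
    using integral_antiperiodic_decay[OF k E_meas E_shift E_norm F_meas F_bounded F_supp F_deriv]
    unfolding E_def F_def by simp
qed

lemma abs_le_supnorm: "j \<le> n \<Longrightarrow> real_of_int \<bar>c j\<bar> \<le> supnorm n c"
  unfolding supnorm_def by (rule Max_ge) auto

lemma supnorm_attained:
  assumes "\<exists>k\<le>n. c k \<noteq> 0"
  obtains k where "k \<le> n" "real_of_int \<bar>c k\<bar> = supnorm n c" "c k \<noteq> 0"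
proof -
  have "supnorm n c \<in> (\<lambda>k. real_of_int \<bar>c k\<bar>) ` {0..n}"
    unfolding supnorm_def by (rule Max_in) auto
  then obtain k where k: "k \<le> n" "real_of_int \<bar>c k\<bar> = supnorm n c" by auto
  moreover have "c k \<noteq> 0"
  proof
    assume "c k = 0"
    then have "c j = 0" if "j \<le> n" for j
      using k abs_le_supnorm[OF that, of c] by simp
    then show False using assms by blast
  qed
  ultimately show ?thesis using that by blast
qed

lemma sum_binomial_div_power_le:
  fixes x0 R :: real
  assumes x0: "0 < x0" "x0 \<le> R" and K\<psi>: "\<And>i. 0 \<le> K\<psi> i" and Kh: "\<And>i. 0 \<le> Kh i"
  shows "(\<Sum>i=0..N. real (N choose i) * K\<psi> i * (Kh (N - i) / x0^(N - i + 1)))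
       \<le> (\<Sum>i=0..N. real (N choose i) * K\<psi> i * Kh (N - i) * R^i) / x0^(N+1)"
  unfolding sum_divide_distrib
proof (intro sum_mono)
  fix i
  assume "i \<in> {0..N}"
  then have "x0^(N+1) = x0^i * x0^(N - i + 1)"
    by (simp flip: power_add)
  moreover have "Kh (N - i) * x0^i \<le> Kh (N - i) * R^i"
    using x0 Kh by (intro mult_left_mono power_mono) auto
  ultimately have "Kh (N - i) / x0^(N - i + 1) \<le> Kh (N - i) * R^i / x0^(N+1)"
    using x0 by (simp add: field_simps)
  then have "real (N choose i) * K\<psi> i * (Kh (N - i) / x0^(N - i + 1))
      \<le> real (N choose i) * K\<psi> i * (Kh (N - i) * R^i / x0^(N+1))"
    by (intro mult_left_mono mult_nonneg_nonneg K\<psi>) auto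
  then show "real (N choose i) * K\<psi> i * (Kh (N - i) / x0^(N - i + 1))
      \<le> real (N choose i) * K\<psi> i * Kh (N - i) * R^i / x0^(N+1)"
    by simp
qed

text \<open>With \<open>P = Q\<^sup>2/Z\<close> and \<open>x\<^sub>0 = q/Q\<close>: the step \<open>d = q/(2Ps)\<close> of the differences is \<open>x\<^sub>0 Z/(2Qs)\<close>.\<close>
lemma step_power_div_eq:
  fixes q Q s Z :: real
  assumes "q > 0" "Q > 0" "s > 0" "Z > 0"
  shows "(q / (2 * (Q * Q / Z) * s))^N / (q / Q)^(N+1) = (1/2)^N * (Z / (Q * s))^N * (Q / q)"
proof -
  have ratio: "q / (2 * (Q * Q / Z) * s) / (q / Q) = (1/2) * (Z / (Q * s))"
    using assms by (simp add: field_simps)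
  have "(q / (2 * (Q * Q / Z) * s))^N / (q / Q)^(N+1) = (q / (2 * (Q * Q / Z) * s) / (q / Q))^N * (Q / q)"
    by (simp add: power_divide power_mult_distrib)
  also have "\<dots> = (1/2)^N * (Z / (Q * s))^N * (Q / q)"
    unfolding ratio power_mult_distrib ..
  finally show ?thesis .
qed

lemma norm_integral_w_low_h_fun_le:
  fixes a c :: "nat \<Rightarrow> real" and K\<psi> Kh :: "nat \<Rightarrow> real"
  assumes \<epsilon>: "\<epsilon> > 0" and P: "P > 0" and q: "q > 0" and x0: "x0 > 0"
    and k: "k \<le> n" and ck: "c k \<noteq> 0" and a: "\<And>j. j \<le> n \<Longrightarrow> \<bar>a j\<bar> \<le> 1"
    and K\<psi>: "\<And>m t. \<bar>w_factor_deriv \<epsilon> P m t\<bar> \<le> K\<psi> m"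
    and Kh: "\<And>m J y. \<bar>h_trunc_deriv x0 J m y\<bar> \<le> Kh m / x0^(m+1)"
  shows "norm (integral\<^sup>L (lborel_Pi n) (\<lambda>u.
            of_real (w_low n \<epsilon> P u * h_fun x0 (\<Sum>j\<in>{0..n}. a j * u j))
            * e_q q (- P * (\<Sum>j\<in>{0..n}. c j * u j))))
     \<le> (1/2)^N * ((q / (2 * P * \<bar>c k\<bar>))^N * (K\<psi> 0 ^ n
          * ((\<Sum>i=0..N. real (N choose i) * K\<psi> i * Kh (N - i) * (2 * (real n + 1))^i) / x0^(N+1))))
        * (real N + 1) * 2^(n+1)"
    (is "norm (integral\<^sup>L _ ?f) \<le> (1/2)^N * (?d^N * (K\<psi> 0 ^ n * (?S / _))) * _ * _")
proof -
  have Kh0: "Kh m \<ge> 0" for m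
  proof -
    have "0 \<le> Kh m / x0^(m+1)" using Kh[where m=m and J=0 and y=0] by linarith
    moreover have "0 < x0^(m+1)" using x0 by simp
    ultimately show ?thesis by (simp add: zero_le_divide_iff)
  qed
  have K\<psi>0: "K\<psi> m \<ge> 0" for m using K\<psi>[of m 0] by linarith
  show ?thesis
  proof (cases "2 * (real n + 1) \<le> x0")
    case True
    have vanish: "w_low n \<epsilon> P u * h_fun x0 (\<Sum>j\<in>{0..n}. a j * u j) = 0" for u
      using w_low_mult_h_fun_eq[OF \<epsilon> P x0 a, where J=0] True by (simp add: h_trunc_deriv_def)
    have "integral\<^sup>L (lborel_Pi n) ?f = 0"
      unfolding vanish by simp
    then show ?thesis
      using q P K\<psi>0 Kh0 x0 by (simp add: sum_nonneg)
  next
    case False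
    define J where "J = nat \<lceil>2 * (real n + 1) / x0\<rceil>"
    have "2 * (real n + 1) / x0 \<le> real J"
      unfolding J_def by (rule real_nat_ceiling_ge)
    then have J: "2 * (real n + 1) \<le> x0 * real (Suc J)"
      using x0 by (simp add: divide_le_eq algebra_simps)
    have truncate: "integral\<^sup>L (lborel_Pi n) ?f = integral\<^sup>L (lborel_Pi n) (\<lambda>u.
        of_real (w_low n \<epsilon> P u * h_trunc_deriv x0 J 0 (\<Sum>j\<in>{0..n}. a j * u j))
        * e_q q (- P * (\<Sum>j\<in>{0..n}. c j * u j)))"
      using w_low_mult_h_fun_eq[OF \<epsilon> P x0 a J] by presburger
    have "norm (integral\<^sup>L (lborel_Pi n) ?f) \<le> (1/2)^N * (?d^N
          * (K\<psi> 0 ^ n * (\<Sum>i=0..N. real (N choose i) * K\<psi> i * (Kh (N - i) / x0^(N - i + 1)))))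
        * (real N + 1) * 2^(n+1)"
      unfolding truncate
      by (rule norm_integral_w_low_decay[where a=a and c=c and H="h_trunc_deriv x0 J"
            and KH="\<lambda>m. Kh m / x0^(m+1)", OF \<epsilon> P q k ck a[OF k] deriv_seq_h_trunc_deriv Kh K\<psi>])
    also have "\<dots> \<le> (1/2)^N * (?d^N * (K\<psi> 0 ^ n * (?S / x0^(N+1)))) * (real N + 1) * 2^(n+1)"
    proof -
      have "K\<psi> 0 ^ n * (\<Sum>i=0..N. real (N choose i) * K\<psi> i * (Kh (N - i) / x0^(N - i + 1)))
          \<le> K\<psi> 0 ^ n * (?S / x0^(N+1))"
        using False K\<psi>0[of 0] by (intro mult_left_mono sum_binomial_div_power_le x0 K\<psi>0 Kh0) auto
      then have "(1/2)^N * (?d^N * (K\<psi> 0 ^ n * (\<Sum>i=0..N. real (N choose i) * K\<psi> i * (Kh (N - i) / x0^(N - i + 1)))))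
          \<le> (1/2)^N * (?d^N * (K\<psi> 0 ^ n * (?S / x0^(N+1))))"
        using P q by (intro mult_left_mono[OF mult_left_mono]) auto
      then show ?thesis
        by (rule mult_right_mono[OF mult_right_mono]) auto
    qed
    finally show ?thesis .
  qed
qed

definition decay_const :: "nat \<Rightarrow> nat \<Rightarrow> (nat \<Rightarrow> real) \<Rightarrow> (nat \<Rightarrow> real) \<Rightarrow> real" where
  "decay_const n N K\<psi> Kh = (1/4)^N * (real N + 1) * 2^(n+1) * K\<psi> 0 ^ n
     * (\<Sum>i=0..N. real (N choose i) * K\<psi> i * Kh (N - i) * (2 * (real n + 1))^i)"

lemma norm_I_int_le:
  fixes K\<psi> Kh :: "nat \<Rightarrow> real"
  assumes K\<psi>: "\<And>m P t. \<bar>w_factor_deriv \<epsilon> P m t\<bar> \<le> K\<psi> m"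
    and Kh: "\<And>m x0 J y. x0 > 0 \<Longrightarrow> \<bar>h_trunc_deriv x0 J m y\<bar> \<le> Kh m / x0^(m+1)"
    and \<epsilon>: "0 < \<epsilon>" and B: "B \<ge> 1"
    and xi0: "x i0 \<ge> 1" and yj0: "y j0 \<ge> 1"
    and xb: "\<forall>i\<le>n. \<bar>x i\<bar> \<le> x i0" and yb: "\<forall>j\<le>n. \<bar>y j\<bar> \<le> y j0"
    and q: "q \<ge> 1" and c: "\<exists>k\<le>n. c k \<noteq> 0"
  shows "norm (I_int n \<epsilon> B x y i0 j0 q c)
      \<le> decay_const n N K\<psi> Kh * (sqrt B / real q) *
         (real_of_int (x i0 * y j0) / (sqrt B * supnorm n c)) ^ N"
proof -
  define X where "X = real_of_int (x i0)"
  define Y where "Y = real_of_int (y j0)"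
  define Q where "Q = sqrt B"
  define P where "P = B / (X * Y)"
  define x0 where "x0 = real q / Q"
  define s where "s = supnorm n c"
  define a where "a j = real_of_int (x j * y j) / (X * Y)" for j
  define S where "S = (\<Sum>i=0..N. real (N choose i) * K\<psi> i * Kh (N - i) * (2 * (real n + 1))^i)"
  have X1: "X \<ge> 1" and Y1: "Y \<ge> 1" using xi0 yj0 by (auto simp: X_def Y_def)
  have Q1: "Q \<ge> 1" and QQ: "Q * Q = B" using B by (auto simp: Q_def)
  have P0: "P > 0" using B X1 Y1 by (simp add: P_def)
  have q0: "real q > 0" using q by simp
  have x00: "x0 > 0" using q0 Q1 by (simp add: x0_def)
  obtain k where k: "k \<le> n" "real_of_int \<bar>c k\<bar> = s" "c k \<noteq> 0"
    using supnorm_attained[OF c] unfolding s_def by blast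
  have s1: "s \<ge> 1" using k by linarith
  have a: "\<bar>a j\<bar> \<le> 1" if "j \<le> n" for j
  proof -
    have "\<bar>x j * y j\<bar> \<le> x i0 * y j0"
      unfolding abs_mult using xb yb that by (intro mult_mono) auto
    then have "\<bar>real_of_int (x j * y j)\<bar> \<le> X * Y"
      unfolding X_def Y_def by (metis of_int_abs of_int_le_iff of_int_mult)
    then show ?thesis using X1 Y1 by (simp add: a_def abs_divide)
  qed
  have "I_int n \<epsilon> B x y i0 j0 q c = integral\<^sup>L (lborel_Pi n) (\<lambda>u.
      of_real (w_low n \<epsilon> P u * h_fun x0 (\<Sum>j\<in>{0..n}. a j * u j))
      * e_q (real q) (- P * (\<Sum>j\<in>{0..n}. real_of_int (c j) * u j)))"
    by (simp add: I_int_def Let_def P_def x0_def Q_def X_def Y_def a_def sum_divide_distrib)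
  also have "norm \<dots> \<le> (1/2)^N * ((real q / (2 * P * s))^N * (K\<psi> 0 ^ n * (S / x0^(N+1))))
      * (real N + 1) * 2^(n+1)"
    unfolding S_def k(2)[symmetric] of_int_abs
    by (rule norm_integral_w_low_h_fun_le[where c="\<lambda>j. real_of_int (c j)",
          OF \<epsilon> P0 q0 x00 k(1) _ a K\<psi> Kh[OF x00]]) (use k in simp_all)
  also have "(real q / (2 * P * s))^N * (K\<psi> 0 ^ n * (S / x0^(N+1)))
      = (real q / (2 * P * s))^N / x0^(N+1) * (K\<psi> 0 ^ n * S)"
    by simp
  also have "(real q / (2 * P * s))^N / x0^(N+1) = (1/2)^N * (X * Y / (Q * s))^N * (Q / real q)"
    unfolding P_def x0_def QQ[symmetric] using q0 Q1 s1 X1 Y1 by (intro step_power_div_eq) auto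
  also have "(1/2)^N * ((1/2)^N * (X * Y / (Q * s))^N * (Q / real q) * (K\<psi> 0 ^ n * S))
      * (real N + 1) * 2^(n+1) = decay_const n N K\<psi> Kh * (Q / real q) * (X * Y / (Q * s))^N"
  proof -
    have "(1/2::real)^N * (1/2)^N = (1/4)^N"
      by (simp flip: power_mult_distrib)
    then show ?thesis
      unfolding decay_const_def S_def[symmetric] by (simp add: mult_ac)
  qed
  finally show ?thesis
    by (simp add: X_def Y_def Q_def s_def)
qed

theorem mainTheorem3:
  fixes n N :: nat and \<epsilon> :: real
  assumes "n \<ge> 2" and "0 < \<epsilon>" and "\<epsilon> < 1"
  shows "\<exists>C::real. \<forall>(i0::nat) (j0::nat) (B::real) (x::nat \<Rightarrow> int) (y::nat \<Rightarrow> int) (q::nat) (c::nat \<Rightarrow> int).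
    i0 \<le> n \<longrightarrow> j0 \<le> n \<longrightarrow> B \<ge> 1 \<longrightarrow> x i0 \<ge> 1 \<longrightarrow> y j0 \<ge> 1 \<longrightarrow>
    (\<forall>i\<le>n. \<bar>x i\<bar> \<le> x i0) \<longrightarrow> (\<forall>j\<le>n. \<bar>y j\<bar> \<le> y j0) \<longrightarrow>
    q \<ge> 1 \<longrightarrow> (\<exists>k\<le>n. c k \<noteq> 0) \<longrightarrow>
    norm (I_int n \<epsilon> B x y i0 j0 q c)
      \<le> C * (sqrt B / real q) *
         (real_of_int (x i0 * y j0) / (sqrt B * supnorm n c)) ^ N"
proof -
  obtain K\<psi> where K\<psi>: "\<And>m P t. \<bar>w_factor_deriv \<epsilon> P m t\<bar> \<le> K\<psi> m"
    using w_factor_deriv_bounded by blast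
  obtain Kh where Kh: "\<And>m x0 J y. x0 > 0 \<Longrightarrow> \<bar>h_trunc_deriv x0 J m y\<bar> \<le> Kh m / x0^(m+1)"
    using h_trunc_deriv_bounded by blast
  show ?thesis
    using norm_I_int_le[OF K\<psi> Kh \<open>0 < \<epsilon>\<close>] by blast
qed

end
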